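(* Let $\Lambda=(\lambda_i)_{i=1}^{2S}$ be the eigenspectrum of a $2S\times2S$ quantum CM that does not satisfy the unique pairing condition. Then there exist two quantum CMs with eigenspectrum $\Lambda$ having different multisets of symplectic eigenvalues or different squeezing parameters; in particular the quantum CMs with eigenspectrum $\Lambda$ do not form a single orbit under the action $\Gamma\mapsto W\Gamma W^T$ of $\mathrm{SpO}(2S,\mathbb{R})$.
   Context: Fix $S\ge1$. Coordinates of $\mathbb{R}^{2S}$ are ordered as $(q_1,p_1,\dots,q_S,p_S)$. Let $\Omega=\bigoplus_{i=1}^S\begin{pmatrix}0&1\\-1&0\end{pmatrix}$. $\mathrm{SpO}(2S,\mathbb{R})$ is the group of real $2S\times2S$ matrices that are orthogonal and symplectic. A quantum CM is a real symmetric positive-definite $2S\times 2S$ matrix $\Gamma$ such that $\Gamma+i\Omega$ is positive semidefinite. Every quantum CM admits a decomposition $\Gamma=KQLTL^TQK^T$ where $K,L\in\mathrm{SpO}(2S,\mathbb{R})$, $Q=\bigoplus_i\mathrm{diag}(e^{r_i},e^{-r_i})$ and $T=\bigoplus_i\mathrm{diag}(\nu_i,\nu_i)$ with $\nu_i\ge1$; the $\nu_i$ are the symplectic eigenvalues (thermal parameters) and the $r_i$ the squeezing parameters. A diagonal matrix $\bigoplus_i\mathrm{diag}(a_i,b_i)$ with $a_ib_i\ge1$ for all $i$ is a quantum CM with thermal parameters $\sqrt{a_ib_i}$ and squeezing parameters $\pm\tfrac14\log(b_i/a_i)$. Let $\Lambda=(\lambda_i)_{i=1}^{2S}$ be the eigenvalues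 of a quantum CM in non-ascending order. Let $G(\Lambda)$ be the graph with vertex set $\{1,\dots,2S\}$ and edge set $\{\{i,j\}: i<j,\ \lambda_i\lambda_j\ge 1\}$. $\Lambda$ satisfies the unique pairing condition if $G(\Lambda)$ has a unique perfect matching up to permutations of vertices carrying equal eigenvalues. *)

theory Defs
  imports "Jordan_Normal_Form.Char_Poly" "Jordan_Normal_Form.Conjugate"
begin

text \<open>Mode k (0-based) occupies coordinates 2k (q) and 2k+1 (p), so coordinates are
  ordered (q_1,p_1,...,q_S,p_S). All matrices are 2S x 2S real matrices.\<close>

definition Omega :: "nat \<Rightarrow> real mat" where
  "Omega S = mat (2*S) (2*S) (\<lambda>(i,j).
      if even i \<and> j = i + 1 then 1 else if odd i \<and> i = j + 1 then -1 else 0)"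

definition SpO :: "nat \<Rightarrow> real mat set" where
  "SpO S = {W. W \<in> carrier_mat (2*S) (2*S) \<and>
                transpose_mat W * W = 1\<^sub>m (2*S) \<and>
                W * Omega S * transpose_mat W = Omega S}"

definition pos_def_real :: "nat \<Rightarrow> real mat \<Rightarrow> bool" where
  "pos_def_real n A \<longleftrightarrow> (\<forall>v \<in> carrier_vec n. v \<noteq> 0\<^sub>v n \<longrightarrow> v \<bullet> (A *\<^sub>v v) > 0)"

definition psd_complex :: "nat \<Rightarrow> complex mat \<Rightarrow> bool" where
  "psd_complex n M \<longleftrightarrow> M \<in> carrier_mat n n \<and>
     (\<forall>v \<in> carrier_vec n. conjugate v \<bullet> (M *\<^sub>v v) \<in> \<real> \<and>
                            Re (conjugate v \<bullet> (M *\<^sub>v v)) \<ge> 0)"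

definition quantum_CM :: "nat \<Rightarrow> real mat \<Rightarrow> bool" where
  "quantum_CM S \<Gamma> \<longleftrightarrow> \<Gamma> \<in> carrier_mat (2*S) (2*S) \<and> transpose_mat \<Gamma> = \<Gamma> \<and>
     pos_def_real (2*S) \<Gamma> \<and>
     psd_complex (2*S) (map_mat complex_of_real \<Gamma> + \<i> \<cdot>\<^sub>m map_mat complex_of_real (Omega S))"

definition Qmat :: "nat \<Rightarrow> real list \<Rightarrow> real mat" where
  "Qmat S r = mat (2*S) (2*S) (\<lambda>(i,j).
      if i = j then (if even i then exp (r ! (i div 2)) else exp (- (r ! (i div 2)))) else 0)"

definition Tmat :: "nat \<Rightarrow> real list \<Rightarrow> real mat" where
  "Tmat S \<nu> = mat (2*S) (2*S) (\<lambda>(i,j). if i = j then \<nu> ! (i div 2) else 0)"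

definition is_decomposition :: "nat \<Rightarrow> real mat \<Rightarrow> real list \<Rightarrow> real list \<Rightarrow> bool" where
  "is_decomposition S \<Gamma> r \<nu> \<longleftrightarrow> length r = S \<and> length \<nu> = S \<and> (\<forall>x \<in> set \<nu>. x \<ge> 1) \<and>
     (\<exists>K \<in> SpO S. \<exists>L \<in> SpO S.
        \<Gamma> = K * Qmat S r * L * Tmat S \<nu> * transpose_mat L * Qmat S r * transpose_mat K)"

definition CM_params :: "nat \<Rightarrow> real mat \<Rightarrow> (real list \<times> real list) set" where
  "CM_params S \<Gamma> = {(\<nu>, r). is_decomposition S \<Gamma> r \<nu>}"

definition eigenspectrum :: "nat \<Rightarrow> real mat \<Rightarrow> real list \<Rightarrow> bool" where
  "eigenspectrum S \<Gamma> \<Lambda> \<longleftrightarrow> \<Gamma> \<in> carrier_mat (2*S) (2*S) \<and> length \<Lambda> = 2*S \<and>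
     sorted_wrt (\<ge>) \<Lambda> \<and> char_poly \<Gamma> = (\<Prod>x \<leftarrow> \<Lambda>. [:- x, 1:])"

definition G_edge :: "real list \<Rightarrow> nat \<Rightarrow> nat \<Rightarrow> bool" where
  "G_edge \<Lambda> i j \<longleftrightarrow> i \<noteq> j \<and> i < length \<Lambda> \<and> j < length \<Lambda> \<and> \<Lambda> ! i * \<Lambda> ! j \<ge> 1"

text \<open>A perfect matching of G(\<Lambda>), given as a fixed-point-free involution of the
  vertex set matching each vertex to a neighbour.\<close>
definition perfect_matching :: "real list \<Rightarrow> (nat \<Rightarrow> nat) \<Rightarrow> bool" where
  "perfect_matching \<Lambda> m \<longleftrightarrow>
     (\<forall>i < length \<Lambda>. m i < length \<Lambda> \<and> m (m i) = i \<and> G_edge \<Lambda> i (m i))"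

definition matching_equiv :: "real list \<Rightarrow> (nat \<Rightarrow> nat) \<Rightarrow> (nat \<Rightarrow> nat) \<Rightarrow> bool" where
  "matching_equiv \<Lambda> m1 m2 \<longleftrightarrow>
     (\<exists>\<sigma>. bij_betw \<sigma> {0..<length \<Lambda>} {0..<length \<Lambda>} \<and>
          (\<forall>i < length \<Lambda>. \<Lambda> ! (\<sigma> i) = \<Lambda> ! i) \<and>
          (\<forall>i < length \<Lambda>. m2 (\<sigma> i) = \<sigma> (m1 i)))"

definition unique_pairing :: "real list \<Rightarrow> bool" where
  "unique_pairing \<Lambda> \<longleftrightarrow> (\<exists>m. perfect_matching \<Lambda> m) \<and>
     (\<forall>m1 m2. perfect_matching \<Lambda> m1 \<longrightarrow> perfect_matching \<Lambda> m2 \<longrightarrow> matching_equiv \<Lambda> m1 m2)"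

end

theory Submission
  imports Defs "Jordan_Normal_Form.Schur_Decomposition"
begin

(* Evaluating the positivity of
   Gamma + i Omega on suitable vectors gives lambda_j lambda_(2S+1-j) >= 1, so the graph G(Lambda)
   has a perfect matching.  Conversely, every perfect matching m of G(Lambda) is realised by a
   diagonal quantum CM with spectrum Lambda whose modes are the edges of m; its symplectic
   eigenvalues satisfy 2 (nu_1^2 + ... + nu_S^2) = sum_i lambda_i lambda_m(i).  This sum is an
   invariant of every decomposition of Gamma, being -tr((Omega Gamma)^2)/2.  Finally, all
   matchings that pair larger eigenvalues with smaller partners are equivalent, and any other
   matching can be improved by exchanging two partners; so if the pairing is not unique, two
   matchings have different weights and the corresponding CMs have different parameters. *)

section \<open>Orthogonal diagonalisation of symmetric real matrices\<close>

lemma transpose_mat_diag[simp]: "transpose_mat (mat_diag n f) = mat_diag n f"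
  by (rule eq_matI) (auto simp: mat_diag_def)

lemma dim_mat_diag[simp]: "dim_row (mat_diag n f) = n" "dim_col (mat_diag n f) = n"
  by (simp_all add: mat_diag_def)

lemma mat_diag_index[simp]: "i < n \<Longrightarrow> j < n \<Longrightarrow> mat_diag n f $$ (i, j) = (if i = j then f i else 0)"
  by (simp add: mat_diag_def)

lemma mat_diag_mult_vec_index:
  assumes "v \<in> carrier_vec n" and "i < n"
  shows "(mat_diag n f *\<^sub>v v) $ i = f i * v $ i"
proof -
  have "(mat_diag n f *\<^sub>v v) $ i = (\<Sum>j\<in>{0..<n}. (if i = j then f i else 0) * v $ j)"
    using assms by (auto simp: scalar_prod_def mat_diag_def intro!: sum.cong)
  also have "\<dots> = (\<Sum>j\<in>{0..<n}. if i = j then f i * v $ j else 0)"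
    by (intro sum.cong) auto
  finally show ?thesis using assms(2) by simp
qed

lemma mat_diag_quadratic_form:
  fixes f :: "nat \<Rightarrow> 'a :: comm_semiring_1"
  assumes "v \<in> carrier_vec n"
  shows "v \<bullet> (mat_diag n f *\<^sub>v v) = (\<Sum>i<n. f i * (v $ i * v $ i))"
proof -
  have "v \<bullet> (mat_diag n f *\<^sub>v v) = (\<Sum>i<n. v $ i * (mat_diag n f *\<^sub>v v) $ i)"
    by (simp add: scalar_prod_def lessThan_atLeast0 del: index_mult_mat_vec)
  also have "\<dots> = (\<Sum>i<n. f i * (v $ i * v $ i))"
    by (rule sum.cong) (use assms in \<open>simp_all add: mat_diag_mult_vec_index ac_simps del: index_mult_mat_vec\<close>)
  finally show ?thesis .
qed

lemma orthogonal_mat_norm: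
  fixes P :: "real mat"
  assumes P: "P \<in> carrier_mat n n" and PP: "transpose_mat P * P = 1\<^sub>m n" and a: "a \<in> carrier_vec n"
  shows "(P *\<^sub>v a) \<bullet> (P *\<^sub>v a) = a \<bullet> a"
proof -
  have "(P *\<^sub>v a) \<bullet> (P *\<^sub>v a) = (transpose_mat P *\<^sub>v (P *\<^sub>v a)) \<bullet> a"
    using transpose_vec_mult_scalar[OF P a, of "P *\<^sub>v a"] P a by simp
  also have "transpose_mat P *\<^sub>v (P *\<^sub>v a) = a"
    using P a PP by (simp flip: assoc_mult_mat_vec)
  finally show ?thesis .
qed

lemma orthogonal_congruence_quadratic_form:
  fixes P G :: "real mat"
  assumes P: "P \<in> carrier_mat n n" and G: "G \<in> carrier_mat n n"
    and D: "transpose_mat P * G * P = mat_diag n f" and a: "a \<in> carrier_vec n"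
  shows "(P *\<^sub>v a) \<bullet> (G *\<^sub>v (P *\<^sub>v a)) = (\<Sum>q<n. f q * (a $ q * a $ q))"
proof -
  have "(P *\<^sub>v a) \<bullet> (G *\<^sub>v (P *\<^sub>v a)) = (transpose_mat P *\<^sub>v (G *\<^sub>v (P *\<^sub>v a))) \<bullet> a"
    using transpose_vec_mult_scalar[OF P a, of "G *\<^sub>v (P *\<^sub>v a)"] G P a
    by (simp add: comm_scalar_prod[of _ n])
  also have "transpose_mat P *\<^sub>v (G *\<^sub>v (P *\<^sub>v a)) = mat_diag n f *\<^sub>v a"
    unfolding D[symmetric] using P G a by (simp add: assoc_mult_mat_vec[of _ n n _ n])
  also have "(mat_diag n f *\<^sub>v a) \<bullet> a = a \<bullet> (mat_diag n f *\<^sub>v a)"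
    by (rule comm_scalar_prod[of _ n]) (use a mult_mat_vec_carrier[OF mat_diag_dim a] in auto)
  finally show ?thesis
    using a by (simp add: mat_diag_quadratic_form)
qed

lemma assoc_mult_mat_dims:
  "dim_col (A :: 'a :: semiring_0 mat) = dim_row B \<Longrightarrow> dim_col B = dim_row C \<Longrightarrow> A * B * C = A * (B * C)"
  by (metis assoc_mult_mat carrier_matI)

lemma normalized_cols_orthonormal:
  fixes ws :: "real vec list"
  assumes ws: "corthogonal ws" "set ws \<subseteq> carrier_vec n" "length ws = n"
  defines "U \<equiv> mat_of_cols n (map (\<lambda>w. (1 / sqrt (w \<bullet> w)) \<cdot>\<^sub>v w) ws)"
  shows "U \<in> carrier_mat n n" and "transpose_mat U * U = 1\<^sub>m n"
    and "\<And>i. i < n \<Longrightarrow> col U i = (1 / sqrt (ws ! i \<bullet> ws ! i)) \<cdot>\<^sub>v ws ! i"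
proof -
  have wc: "\<And>i. i < n \<Longrightarrow> ws ! i \<in> carrier_vec n" using ws by auto
  have orth: "\<And>i j. i < n \<Longrightarrow> j < n \<Longrightarrow> ws ! i \<bullet> ws ! j = 0 \<longleftrightarrow> i \<noteq> j"
    using corthogonalD[OF ws(1)] ws(3) by auto
  have pos: "ws ! i \<bullet> ws ! i > 0" if "i < n" for i
    using conjugate_square_ge_0_vec[of "ws ! i"] orth[OF that that] by simp
  show U: "U \<in> carrier_mat n n"
    unfolding U_def using mat_of_cols_carrier(1)[of n "map (\<lambda>w. (1 / sqrt (w \<bullet> w)) \<cdot>\<^sub>v w) ws"] ws(3)
    by simp
  show cols: "\<And>i. i < n \<Longrightarrow> col U i = (1 / sqrt (ws ! i \<bullet> ws ! i)) \<cdot>\<^sub>v ws ! i"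
    unfolding U_def using ws wc by simp
  show "transpose_mat U * U = 1\<^sub>m n"
  proof (rule eq_matI)
    fix i j assume "i < dim_row (1\<^sub>m n)" and "j < dim_col (1\<^sub>m n)"
    hence i: "i < n" and j: "j < n" by auto
    have "(transpose_mat U * U) $$ (i, j) = col U i \<bullet> col U j"
      using i j U by simp
    also have "\<dots> = (1 / sqrt (ws ! i \<bullet> ws ! i)) * (1 / sqrt (ws ! j \<bullet> ws ! j)) * (ws ! i \<bullet> ws ! j)"
      using cols[OF i] cols[OF j] wc[OF i] wc[OF j] by simp
    also have "\<dots> = 1\<^sub>m n $$ (i, j)"
    proof (cases "i = j")
      case True
      have "sqrt (ws ! i \<bullet> ws ! i) * sqrt (ws ! i \<bullet> ws ! i) = ws ! i \<bullet> ws ! i"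
        using pos[OF i] by simp
      then show ?thesis using True i pos[OF i] by (simp add: field_simps)
    qed (use orth[OF i j] i j in simp)
    finally show "(transpose_mat U * U) $$ (i, j) = 1\<^sub>m n $$ (i, j)" .
  qed (use U in auto)
qed

lemma orthogonal_mat_first_col:
  fixes v :: "real vec"
  assumes v: "v \<in> carrier_vec n" "v \<noteq> 0\<^sub>v n"
  obtains U c where "U \<in> carrier_mat n n" "transpose_mat U * U = 1\<^sub>m n" "col U 0 = c \<cdot>\<^sub>v v"
proof -
  interpret cof_vec_space n "TYPE(real)" .
  have n: "n > 0"
  proof (rule ccontr)
    assume "\<not> n > 0"
    then have "v = 0\<^sub>v n" using v(1) by (intro eq_vecI) auto
    then show False using v(2) by simp
  qed
  define b where "b = basis_completion v"
  from basis_completion[OF v, folded b_def]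
  have b: "set b \<subseteq> carrier_vec n" "distinct b" "\<not> lin_dep (set b)" "length b = n" "hd b = v"
    by auto
  define ws where "ws = gram_schmidt n b"
  from gram_schmidt_result[OF b(1-3) ws_def]
  have ws: "corthogonal ws" "set ws \<subseteq> carrier_vec n" "length ws = n" using b by auto
  obtain vs where "b = v # vs" using b n by (cases b) auto
  then have "hd ws = v" unfolding ws_def using v(1) by simp
  then have "ws ! 0 = v" using ws(3) n by (cases ws) auto
  then show ?thesis
    by (intro that[of _ "1 / sqrt (v \<bullet> v)"]) (use normalized_cols_orthonormal[OF ws] n in auto)
qed

lemma symmetric_eigenvector_deflation:
  fixes A :: "real mat"
  assumes A: "A \<in> carrier_mat (Suc n) (Suc n)" and sym: "transpose_mat A = A"
    and ev: "eigenvector A v e"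
  obtains U A3 where "U \<in> carrier_mat (Suc n) (Suc n)" "transpose_mat U * U = 1\<^sub>m (Suc n)"
    "A3 \<in> carrier_mat n n" "transpose_mat A3 = A3"
    "transpose_mat U * A * U = four_block_mat (mat 1 1 (\<lambda>_. e)) (0\<^sub>m 1 n) (0\<^sub>m n 1) A3"
proof -
  have v: "v \<in> carrier_vec (Suc n)" "v \<noteq> 0\<^sub>v (Suc n)" "A *\<^sub>v v = e \<cdot>\<^sub>v v"
    using ev A unfolding eigenvector_def by auto
  obtain U c where U: "U \<in> carrier_mat (Suc n) (Suc n)" and UU: "transpose_mat U * U = 1\<^sub>m (Suc n)"
    and col0: "col U 0 = c \<cdot>\<^sub>v v"
    using orthogonal_mat_first_col[OF v(1,2)] by blast
  define A' where "A' = transpose_mat U * A * U"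
  have A': "A' \<in> carrier_mat (Suc n) (Suc n)" unfolding A'_def using U A by auto
  have symA': "A' $$ (i, j) = A' $$ (j, i)" if "i < Suc n" "j < Suc n" for i j
  proof -
    have "transpose_mat A' = transpose_mat U * transpose_mat A * U"
      unfolding A'_def using U A
      by (simp add: transpose_mult[of _ "Suc n" "Suc n" _ "Suc n"] assoc_mult_mat[of _ "Suc n" "Suc n" _ "Suc n"])
    then have "transpose_mat A' = A'" using sym A'_def by simp
    then have "A' $$ (i, j) = transpose_mat A' $$ (i, j)" by simp
    also have "\<dots> = A' $$ (j, i)" using A' that by simp
    finally show ?thesis .
  qed
  have colA'0: "col A' 0 = e \<cdot>\<^sub>v unit_vec (Suc n) 0"
  proof -
    have "col A' 0 = (transpose_mat U * A) *\<^sub>v col U 0"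
      unfolding A'_def using U A by (intro col_mult2) auto
    also have "\<dots> = transpose_mat U *\<^sub>v (A *\<^sub>v (c \<cdot>\<^sub>v v))" using U A v col0 by simp
    also have "A *\<^sub>v (c \<cdot>\<^sub>v v) = e \<cdot>\<^sub>v col U 0"
      using A v col0 by (simp add: mult_mat_vec[OF A] smult_smult_assoc mult.commute)
    also have "transpose_mat U *\<^sub>v (e \<cdot>\<^sub>v col U 0) = e \<cdot>\<^sub>v (transpose_mat U *\<^sub>v col U 0)"
      by (rule mult_mat_vec[of _ "Suc n" "Suc n"]) (use U col_dim[of U 0] in auto)
    also have "transpose_mat U *\<^sub>v col U 0 = col (transpose_mat U * U) 0"
      by (rule col_mult2[symmetric]) (use U in auto)
    finally show ?thesis using UU by simp
  qed
  define A3 where "A3 = mat n n (\<lambda>(i, j). A' $$ (Suc i, Suc j))"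
  have "A' = four_block_mat (mat 1 1 (\<lambda>_. e)) (0\<^sub>m 1 n) (0\<^sub>m n 1) A3"
  proof (rule eq_matI)
    fix i j assume "i < dim_row (four_block_mat (mat 1 1 (\<lambda>_. e)) (0\<^sub>m 1 n) (0\<^sub>m n 1) A3)"
      "j < dim_col (four_block_mat (mat 1 1 (\<lambda>_. e)) (0\<^sub>m 1 n) (0\<^sub>m n 1) A3)"
    then have i: "i < Suc n" and j: "j < Suc n" by (auto simp: A3_def)
    have col0: "A' $$ (k, 0) = (if k = 0 then e else 0)" if "k < Suc n" for k
      using arg_cong[OF colA'0, of "\<lambda>w. w $ k"] A' that by simp
    show "A' $$ (i, j) = four_block_mat (mat 1 1 (\<lambda>_. e)) (0\<^sub>m 1 n) (0\<^sub>m n 1) A3 $$ (i, j)"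
    proof (cases "i = 0 \<or> j = 0")
      case True
      then show ?thesis using col0[OF i] col0[OF j] symA'[OF j, of 0] i j by (auto simp: A3_def)
    next
      case False
      then obtain i' j' where "i = Suc i'" "j = Suc j'" by (cases i; cases j) auto
      then show ?thesis using i j by (simp add: A3_def)
    qed
  qed (use A' in \<open>auto simp: A3_def\<close>)
  moreover have "transpose_mat A3 = A3"
    by (rule eq_matI) (use symA' in \<open>auto simp: A3_def\<close>)
  moreover have "A3 \<in> carrier_mat n n" unfolding A3_def by simp
  ultimately show ?thesis
    using that[OF U UU] unfolding A'_def by blast
qed

lemma symmetric_real_diagonalization:
  fixes A :: "real mat"
  assumes "A \<in> carrier_mat n n" "transpose_mat A = A"
    "char_poly A = (\<Prod>e\<leftarrow>es. [:-e, 1:])"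
  shows "\<exists>P \<in> carrier_mat n n. transpose_mat P * P = 1\<^sub>m n \<and>
           transpose_mat P * A * P = mat_diag n (\<lambda>i. es ! i)"
  using assms
proof (induct es arbitrary: n A)
  case Nil
  then have "n = 0" using degree_monic_char_poly[OF Nil(1)] by simp
  then show ?case using Nil by (intro bexI[of _ "1\<^sub>m 0"]) (auto intro!: eq_matI)
next
  case (Cons e es n A)
  note A = Cons(2) and sym = Cons(3) and cp = Cons(4)
  have "eigenvalue A e" unfolding eigenvalue_root_char_poly[OF A] cp by simp
  then have ev: "eigenvector A (find_eigenvector A e) e" using find_eigenvector[OF A] by simp
  have "n \<noteq> 0"
  proof
    assume "n = 0"
    moreover have "find_eigenvector A e \<in> carrier_vec n" "find_eigenvector A e \<noteq> 0\<^sub>v n"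
      using ev A unfolding eigenvector_def by auto
    ultimately show False by (metis carrier_vecD vec_of_dim_0 index_zero_vec(2))
  qed
  then obtain n1 where n: "n = Suc n1" by (cases n) auto
  obtain U A3 where U: "U \<in> carrier_mat n n" and UU: "transpose_mat U * U = 1\<^sub>m n"
    and A3: "A3 \<in> carrier_mat n1 n1" and sym3: "transpose_mat A3 = A3"
    and blk: "transpose_mat U * A * U = four_block_mat (mat 1 1 (\<lambda>_. e)) (0\<^sub>m 1 n1) (0\<^sub>m n1 1) A3"
    using symmetric_eigenvector_deflation[OF A[unfolded n] sym ev, folded n] .
  have "similar_mat (transpose_mat U * A * U) A"
    unfolding similar_mat_def similar_mat_wit_def Let_def
    using U A UU mat_mult_left_right_inverse[OF _ U UU] by (intro exI[of _ "transpose_mat U"] exI[of _ U]) auto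
  then have "char_poly A = char_poly (mat 1 1 (\<lambda>_. e)) * char_poly A3"
    using char_poly_similar char_poly_four_block_zeros_col[OF _ _ A3, of _ "0\<^sub>m 1 n1"] blk
    by (metis mat_carrier zero_carrier_mat)
  also have "char_poly (mat 1 1 (\<lambda>_. e)) = [:-e, 1:]"
    by (simp add: char_poly_defs det_def sign_def)
  finally have "[:-e, 1:] * char_poly A3 = [:-e, 1:] * (\<Prod>e\<leftarrow>es. [:-e, 1:])"
    using cp by simp
  then have "char_poly A3 = (\<Prod>e\<leftarrow>es. [:-e, 1:])"
    by (metis mult_cancel_left pCons_eq_0_iff zero_neq_one)
  from Cons(1)[OF A3 sym3 this] obtain P3 where P3: "P3 \<in> carrier_mat n1 n1"
    and P3P3: "transpose_mat P3 * P3 = 1\<^sub>m n1"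
    and D3: "transpose_mat P3 * A3 * P3 = mat_diag n1 (\<lambda>i. es ! i)"
    by auto
  define E1 where "E1 = mat 1 1 (\<lambda>_. e)"
  have E1: "E1 \<in> carrier_mat 1 1" unfolding E1_def by simp
  define B where "B = four_block_mat (1\<^sub>m 1) (0\<^sub>m 1 n1) (0\<^sub>m n1 1) P3"
  have B: "B \<in> carrier_mat n n" unfolding B_def using P3 n by auto
  have BT: "transpose_mat B = four_block_mat (1\<^sub>m 1) (0\<^sub>m 1 n1) (0\<^sub>m n1 1) (transpose_mat P3)"
    unfolding B_def using P3 by (subst transpose_four_block_mat) auto
  have "transpose_mat (U * B) * (U * B) = transpose_mat B * (transpose_mat U * U) * B"
    using U B by (simp add: transpose_mult[OF U B] assoc_mult_mat_dims)
  also have "\<dots> = transpose_mat B * B" using UU B by simp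
  also have "\<dots> = four_block_mat (1\<^sub>m 1) (0\<^sub>m 1 n1) (0\<^sub>m n1 1) (1\<^sub>m n1)"
    unfolding BT unfolding B_def using P3 P3P3
    by (subst mult_four_block_mat[of _ 1 1 _ n1 _ n1 _ _ 1 _ n1]) auto
  also have "\<dots> = 1\<^sub>m n" using n by (intro eq_matI) auto
  finally have PP: "transpose_mat (U * B) * (U * B) = 1\<^sub>m n" .
  have "transpose_mat (U * B) * A * (U * B) = transpose_mat B * (transpose_mat U * A * U) * B"
    using U B A by (simp add: transpose_mult[OF U B] assoc_mult_mat_dims)
  also have "\<dots> = four_block_mat E1 (0\<^sub>m 1 n1) (0\<^sub>m n1 1) (transpose_mat P3 * A3 * P3)"
    unfolding blk BT E1_def[symmetric] unfolding B_def using P3 A3 E1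
    by (simp add: mult_four_block_mat[of _ 1 1 _ n1 _ n1 _ _ 1 _ n1] assoc_mult_mat[of _ n1 n1])
  also have "\<dots> = mat_diag n (\<lambda>i. (e # es) ! i)"
    unfolding D3 using n by (intro eq_matI) (auto simp: E1_def nth_Cons')
  finally have "transpose_mat (U * B) * A * (U * B) = mat_diag n (\<lambda>i. (e # es) ! i)" .
  moreover have "U * B \<in> carrier_mat n n" using U B by simp
  ultimately show ?case using PP by blast
qed

section \<open>The symplectic form\<close>

lemma Omega_carrier[simp]: "Omega S \<in> carrier_mat (2*S) (2*S)"
  unfolding Omega_def by simp

lemma dim_Omega[simp]: "dim_row (Omega S) = 2*S" "dim_col (Omega S) = 2*S"
  unfolding Omega_def by simp_all

lemma Omega_mult_vec_carrier[simp]: "u \<in> carrier_vec (2*S) \<Longrightarrow> Omega S *\<^sub>v u \<in> carrier_vec (2*S)"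
  by (rule mult_mat_vec_carrier[OF Omega_carrier])

lemma Omega_index:
  "i < 2*S \<Longrightarrow> j < 2*S \<Longrightarrow> Omega S $$ (i, j) =
     (if even i \<and> j = i + 1 then 1 else if odd i \<and> i = j + 1 then -1 else 0)"
  unfolding Omega_def by simp

lemma Omega_transpose: "transpose_mat (Omega S) = - Omega S"
  by (rule eq_matI) (auto simp: Omega_index)

lemma Omega_row_sum:
  fixes v :: "nat \<Rightarrow> 'a :: real_algebra_1"
  assumes i: "i < 2*S"
  shows "(\<Sum>q\<in>{0..<2*S}. of_real (Omega S $$ (i, q)) * v q) = (if even i then v (i + 1) else - v (i - 1))"
proof (cases "even i")
  case True
  then have "i + 1 < 2*S" using i by presburger
  have "(\<Sum>q\<in>{0..<2*S}. of_real (Omega S $$ (i, q)) * v q) = (\<Sum>q\<in>{0..<2*S}. if q = i + 1 then v q else 0)"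
    using True i by (intro sum.cong) (auto simp: Omega_index)
  then show ?thesis using True \<open>i + 1 < 2*S\<close> by (simp add: sum.delta')
next
  case False
  then have "i - 1 < 2*S" "i = (i - 1) + 1" using i by presburger+
  then have "(\<Sum>q\<in>{0..<2*S}. of_real (Omega S $$ (i, q)) * v q) = (\<Sum>q\<in>{0..<2*S}. if q = i - 1 then - v q else 0)"
    using False i by (intro sum.cong) (auto simp: Omega_index)
  then show ?thesis using False \<open>i - 1 < 2*S\<close> by (simp add: sum.delta')
qed

lemma Omega_mult_vec_index:
  assumes u: "u \<in> carrier_vec (2*S)" and i: "i < 2*S"
  shows "(Omega S *\<^sub>v u) $ i = (if even i then u $ (i + 1) else - u $ (i - 1))"
proof -
  have "(Omega S *\<^sub>v u) $ i = (\<Sum>q\<in>{0..<2*S}. of_real (Omega S $$ (i, q)) * u $ q)"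
    using u i by (auto simp: scalar_prod_def intro!: sum.cong)
  then show ?thesis using Omega_row_sum[OF i, where v = "\<lambda>q. u $ q"] by simp
qed

lemma Omega_Omega_mult_vec:
  assumes u: "u \<in> carrier_vec (2*S)"
  shows "Omega S *\<^sub>v (Omega S *\<^sub>v u) = - u"
proof (rule eq_vecI)
  fix i assume "i < dim_vec (- u)"
  then have i: "i < 2*S" using u by simp
  have Ou: "Omega S *\<^sub>v u \<in> carrier_vec (2*S)" using u by simp
  show "(Omega S *\<^sub>v (Omega S *\<^sub>v u)) $ i = (- u) $ i"
  proof (cases "even i")
    case True
    then have "i + 1 < 2*S" using i by presburger
    then show ?thesis using True i Omega_mult_vec_index[OF Ou i] Omega_mult_vec_index[OF u] u by simp
  next
    case False
    then have "i - 1 < 2*S" "even (i - 1)" "i - 1 + 1 = i" using i by presburger+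
    then show ?thesis using False i Omega_mult_vec_index[OF Ou i] Omega_mult_vec_index[OF u] u by simp
  qed
qed (use u in simp)

lemma Omega_mult_vec_norm:
  assumes u: "u \<in> carrier_vec (2*S)"
  shows "(Omega S *\<^sub>v u) \<bullet> (Omega S *\<^sub>v u) = u \<bullet> u"
proof -
  have "(Omega S *\<^sub>v u) \<bullet> (Omega S *\<^sub>v u) = (transpose_mat (Omega S) *\<^sub>v (Omega S *\<^sub>v u)) \<bullet> u"
    using transpose_vec_mult_scalar[OF Omega_carrier u, of "Omega S *\<^sub>v u"] u by simp
  also have "transpose_mat (Omega S) *\<^sub>v (Omega S *\<^sub>v u) = - (Omega S *\<^sub>v (Omega S *\<^sub>v u))"
    unfolding Omega_transpose using u by (intro eq_vecI) auto
  also have "\<dots> = u" using Omega_Omega_mult_vec[OF u] by simp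
  finally show ?thesis .
qed

section \<open>Spectral constraints on quantum covariance matrices\<close>

lemma scalar_prod_mult_mat_vec_sum:
  fixes G :: "'a :: comm_semiring_0 mat"
  assumes "G \<in> carrier_mat n n" "x \<in> carrier_vec n" "y \<in> carrier_vec n"
  shows "x \<bullet> (G *\<^sub>v y) = (\<Sum>p<n. \<Sum>q<n. x $ p * G $$ (p, q) * y $ q)"
  using assms by (auto simp: scalar_prod_def sum_distrib_left mult.assoc lessThan_atLeast0 intro!: sum.cong)

lemma Re_complexified_quadratic_form:
  fixes G Om :: "real mat" and x y :: "real vec"
  assumes G: "G \<in> carrier_mat n n" and Om: "Om \<in> carrier_mat n n"
    and x: "x \<in> carrier_vec n" and y: "y \<in> carrier_vec n"
  defines "w \<equiv> map_vec complex_of_real x + \<i> \<cdot>\<^sub>v map_vec complex_of_real y"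
  shows "Re (conjugate w \<bullet> ((map_mat complex_of_real G + \<i> \<cdot>\<^sub>m map_mat complex_of_real Om) *\<^sub>v w))
       = x \<bullet> (G *\<^sub>v x) + y \<bullet> (G *\<^sub>v y) - x \<bullet> (Om *\<^sub>v y) + y \<bullet> (Om *\<^sub>v x)"
proof -
  let ?M = "map_mat complex_of_real G + \<i> \<cdot>\<^sub>m map_mat complex_of_real Om"
  have M: "?M \<in> carrier_mat n n" using G Om by auto
  have w: "w \<in> carrier_vec n" using x y unfolding w_def by auto
  have wi: "\<And>p. p < n \<Longrightarrow> w $ p = Complex (x $ p) (y $ p)"
    using x y unfolding w_def by (auto simp: Complex_eq)
  have Mi: "\<And>p q. p < n \<Longrightarrow> q < n \<Longrightarrow> ?M $$ (p, q) = Complex (G $$ (p, q)) (Om $$ (p, q))"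
    using G Om by (auto simp: Complex_eq)
  have cwi: "\<And>p. p < n \<Longrightarrow> conjugate w $ p = Complex (x $ p) (- y $ p)"
    using w wi by (simp add: conjugate_vec_def complex_eq_iff)
  have "conjugate w \<bullet> (?M *\<^sub>v w) = (\<Sum>p<n. \<Sum>q<n. conjugate w $ p * ?M $$ (p, q) * w $ q)"
    by (rule scalar_prod_mult_mat_vec_sum[OF M _ w]) (use w in simp)
  also have "\<dots> = (\<Sum>p<n. \<Sum>q<n. Complex (x $ p) (- y $ p) * Complex (G $$ (p, q)) (Om $$ (p, q))
      * Complex (x $ q) (y $ q))"
    by (intro sum.cong refl) (simp add: cwi Mi wi)
  finally have "Re (conjugate w \<bullet> (?M *\<^sub>v w)) = (\<Sum>p<n. \<Sum>q<n. x $ p * G $$ (p, q) * x $ q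
      + y $ p * G $$ (p, q) * y $ q - x $ p * Om $$ (p, q) * y $ q + y $ p * Om $$ (p, q) * x $ q)"
    by (simp add: Re_sum algebra_simps)
  also have "\<dots> = x \<bullet> (G *\<^sub>v x) + y \<bullet> (G *\<^sub>v y) - x \<bullet> (Om *\<^sub>v y) + y \<bullet> (Om *\<^sub>v x)"
    unfolding scalar_prod_mult_mat_vec_sum[OF G x x] scalar_prod_mult_mat_vec_sum[OF G y y]
      scalar_prod_mult_mat_vec_sum[OF Om x y] scalar_prod_mult_mat_vec_sum[OF Om y x]
    by (simp add: sum.distrib sum_subtractf)
  finally show ?thesis .
qed

(* Positivity of Gamma + i Omega at w = (u.u) u - i (u.Gamma u) Omega u gives an uncertainty
   relation between the directions u and Omega u. *)
lemma quantum_CM_uncertainty: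
  assumes Q: "quantum_CM S \<Gamma>" and u: "u \<in> carrier_vec (2*S)" and u0: "u \<noteq> 0\<^sub>v (2*S)"
  shows "(u \<bullet> (\<Gamma> *\<^sub>v u)) * ((Omega S *\<^sub>v u) \<bullet> (\<Gamma> *\<^sub>v (Omega S *\<^sub>v u))) \<ge> (u \<bullet> u)\<^sup>2"
proof -
  have G: "\<Gamma> \<in> carrier_mat (2*S) (2*S)" and pd: "pos_def_real (2*S) \<Gamma>"
    and ps: "psd_complex (2*S) (map_mat complex_of_real \<Gamma> + \<i> \<cdot>\<^sub>m map_mat complex_of_real (Omega S))"
    using Q unfolding quantum_CM_def by auto
  define \<alpha> where "\<alpha> = u \<bullet> (\<Gamma> *\<^sub>v u)"
  define \<beta> where "\<beta> = (Omega S *\<^sub>v u) \<bullet> (\<Gamma> *\<^sub>v (Omega S *\<^sub>v u))"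
  define s where "s = u \<bullet> u"
  have \<alpha>: "\<alpha> > 0" using pd u u0 unfolding pos_def_real_def \<alpha>_def by auto
  define x where "x = s \<cdot>\<^sub>v u"
  define y where "y = (- \<alpha>) \<cdot>\<^sub>v (Omega S *\<^sub>v u)"
  have x: "x \<in> carrier_vec (2*S)" and y: "y \<in> carrier_vec (2*S)" using u unfolding x_def y_def by auto
  define w where "w = map_vec complex_of_real x + \<i> \<cdot>\<^sub>v map_vec complex_of_real y"
  have "w \<in> carrier_vec (2*S)" using x y unfolding w_def by auto
  then have "Re (conjugate w \<bullet> ((map_mat complex_of_real \<Gamma> + \<i> \<cdot>\<^sub>m map_mat complex_of_real (Omega S)) *\<^sub>v w)) \<ge> 0"
    using ps unfolding psd_complex_def by auto
  also have "Re (conjugate w \<bullet> ((map_mat complex_of_real \<Gamma> + \<i> \<cdot>\<^sub>m map_mat complex_of_real (Omega S)) *\<^sub>v w))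
     = x \<bullet> (\<Gamma> *\<^sub>v x) + y \<bullet> (\<Gamma> *\<^sub>v y) - x \<bullet> (Omega S *\<^sub>v y) + y \<bullet> (Omega S *\<^sub>v x)"
    unfolding w_def by (rule Re_complexified_quadratic_form[OF G Omega_carrier x y])
  also have "x \<bullet> (\<Gamma> *\<^sub>v x) = s * s * \<alpha>"
    unfolding x_def \<alpha>_def using u G by (simp add: mult_mat_vec[OF G])
  also have "y \<bullet> (\<Gamma> *\<^sub>v y) = \<alpha> * \<alpha> * \<beta>"
    unfolding y_def \<beta>_def using u G by (simp add: mult_mat_vec[OF G])
  also have "x \<bullet> (Omega S *\<^sub>v y) = s * \<alpha> * s"
    unfolding x_def y_def s_def using u
    by (simp add: mult_mat_vec[OF Omega_carrier] Omega_Omega_mult_vec[OF u])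
  also have "y \<bullet> (Omega S *\<^sub>v x) = - \<alpha> * s * s"
    unfolding x_def y_def s_def using u
    by (simp add: mult_mat_vec[OF Omega_carrier] Omega_mult_vec_norm[OF u])
  finally have "0 \<le> \<alpha> * (\<alpha> * \<beta> - s * s)" by (simp add: algebra_simps)
  then have "\<alpha> * \<beta> - s * s \<ge> 0" using \<alpha> by (simp add: zero_le_mult_iff)
  then show ?thesis unfolding \<alpha>_def \<beta>_def s_def by (simp add: power2_eq_square)
qed

lemma quantum_CM_eigenvalue_pos:
  assumes Q: "quantum_CM S \<Gamma>" and P: "P \<in> carrier_mat (2*S) (2*S)"
    and PP: "transpose_mat P * P = 1\<^sub>m (2*S)"
    and D: "transpose_mat P * \<Gamma> * P = mat_diag (2*S) f" and q: "q < 2*S"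
  shows "f q > 0"
proof -
  have G: "\<Gamma> \<in> carrier_mat (2*S) (2*S)" and pd: "pos_def_real (2*S) \<Gamma>"
    using Q unfolding quantum_CM_def by auto
  define a :: "real vec" where "a = unit_vec (2*S) q"
  have a: "a \<in> carrier_vec (2*S)" unfolding a_def by simp
  have "(P *\<^sub>v a) \<bullet> (P *\<^sub>v a) = 1" using orthogonal_mat_norm[OF P PP a] q by (simp add: a_def)
  then have "P *\<^sub>v a \<noteq> 0\<^sub>v (2*S)" by auto
  then have "(P *\<^sub>v a) \<bullet> (\<Gamma> *\<^sub>v (P *\<^sub>v a)) > 0" using pd P a unfolding pos_def_real_def by auto
  also have "(P *\<^sub>v a) \<bullet> (\<Gamma> *\<^sub>v (P *\<^sub>v a)) = (\<Sum>p<2*S. f p * (a $ p * a $ p))"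
    by (rule orthogonal_congruence_quadratic_form[OF P G D a])
  also have "\<dots> = (\<Sum>p<2*S. if p = q then f q else 0)"
    unfolding a_def by (intro sum.cong) (auto simp: unit_vec_def)
  also have "\<dots> = f q" using q by simp
  finally show ?thesis .
qed

lemma exists_tail_vec_with_tail_image:
  fixes Z :: "'a :: field mat"
  assumes Z: "Z \<in> carrier_mat n n" and tj: "t + j + 1 = n"
  obtains a where "a \<in> carrier_vec n" "a \<noteq> 0\<^sub>v n" "\<And>q. q < t \<Longrightarrow> a $ q = 0"
    "\<And>i. i < j \<Longrightarrow> (Z *\<^sub>v a) $ i = 0"
proof -
  define E where "E = mat\<^sub>r (j+1) (j+1)
    (\<lambda>i. if i = j then 0\<^sub>v (j+1) else vec (j+1) (\<lambda>l. Z $$ (i, t + l)))"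
  have E: "E \<in> carrier_mat (j+1) (j+1)" unfolding E_def by simp
  have "det E = 0" unfolding E_def by (rule det_row_0) auto
  then obtain c where c: "c \<in> carrier_vec (j+1)" "c \<noteq> 0\<^sub>v (j+1)" "E *\<^sub>v c = 0\<^sub>v (j+1)"
    using det_0_iff_vec_prod_zero[OF E] by auto
  define a where "a = vec n (\<lambda>q. if t \<le> q then c $ (q - t) else 0)"
  have a: "a \<in> carrier_vec n" unfolding a_def by simp
  obtain l where l: "l < j+1" "c $ l \<noteq> 0"
  proof -
    have "\<exists>l < j+1. c $ l \<noteq> 0"
    proof (rule ccontr)
      assume "\<not> (\<exists>l < j+1. c $ l \<noteq> 0)"
      then have "c = 0\<^sub>v (j+1)" using c(1) by (intro eq_vecI) auto
      then show False using c(2) by simp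
    qed
    then show ?thesis using that by blast
  qed
  have "a \<noteq> 0\<^sub>v n"
  proof
    assume "a = 0\<^sub>v n"
    then have "a $ (t + l) = 0" using l tj by simp
    then show False using l tj unfolding a_def by simp
  qed
  moreover have "(Z *\<^sub>v a) $ i = 0" if i: "i < j" for i
  proof -
    have "(Z *\<^sub>v a) $ i = (\<Sum>q\<in>{0..<n}. if t \<le> q then Z $$ (i, q) * c $ (q - t) else 0)"
      using Z i tj unfolding a_def by (auto simp: scalar_prod_def intro!: sum.cong)
    also have "\<dots> = (\<Sum>q\<in>{0..<n} \<inter> {q. t \<le> q}. Z $$ (i, q) * c $ (q - t))"
      by (simp add: sum.inter_restrict)
    also have "{0..<n} \<inter> {q. t \<le> q} = {0 + t..<(j+1) + t}" using tj by auto
    also have "(\<Sum>q\<in>{0 + t..<(j+1) + t}. Z $$ (i, q) * c $ (q - t)) = (\<Sum>l\<in>{0..<j+1}. Z $$ (i, t + l) * c $ l)"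
      by (simp only: sum.shift_bounds_nat_ivl) (simp add: add.commute)
    also have "\<dots> = (E *\<^sub>v c) $ i"
      using i c(1) E unfolding E_def by (simp add: scalar_prod_def)
    finally show ?thesis using c(3) i by simp
  qed
  moreover have "a $ q = 0" if "q < t" for q using that tj unfolding a_def by simp
  ultimately show ?thesis using that[OF a] by blast
qed

lemma sorted_weighted_sum_le:
  fixes L :: "real list"
  assumes sorted: "sorted_wrt (\<ge>) L" and len: "length L = n" and t: "t < n"
    and a: "a \<in> carrier_vec n" and head: "\<And>q. q < t \<Longrightarrow> a $ q = 0"
  shows "(\<Sum>q<n. L ! q * (a $ q * a $ q)) \<le> L ! t * (a \<bullet> a)"
proof -
  have "(\<Sum>q<n. L ! q * (a $ q * a $ q)) \<le> (\<Sum>q<n. L ! t * (a $ q * a $ q))"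
  proof (rule sum_mono)
    fix q assume q: "q \<in> {..<n}"
    show "L ! q * (a $ q * a $ q) \<le> L ! t * (a $ q * a $ q)"
    proof (cases "t \<le> q")
      case True
      then have "L ! q \<le> L ! t" using sorted q len
        by (cases "t = q") (auto simp: sorted_wrt_iff_nth_less)
      then show ?thesis by (intro mult_right_mono) auto
    qed (use head in simp)
  qed
  also have "\<dots> = L ! t * (a \<bullet> a)"
    using a by (simp add: scalar_prod_def sum_distrib_left lessThan_atLeast0)
  finally show ?thesis .
qed

(* Choose u spanned by the eigenvectors of index >= 2S-1-j such that Omega u is spanned by those
   of index >= j; bounding both Rayleigh quotients in the uncertainty relation gives the claim. *)
lemma quantum_CM_eigenvalue_pairing:
  assumes Q: "quantum_CM S \<Gamma>" and P: "P \<in> carrier_mat (2*S) (2*S)"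
    and PP: "transpose_mat P * P = 1\<^sub>m (2*S)"
    and D: "transpose_mat P * \<Gamma> * P = mat_diag (2*S) (\<lambda>i. L ! i)"
    and sorted: "sorted_wrt (\<ge>) L" and len: "length L = 2*S" and j: "j < 2*S"
  shows "L ! j * L ! (2*S - 1 - j) \<ge> 1"
proof -
  define t where "t = 2*S - 1 - j"
  have tj: "t + j + 1 = 2*S" "t < 2*S" using j unfolding t_def by auto
  have G: "\<Gamma> \<in> carrier_mat (2*S) (2*S)" and pd: "pos_def_real (2*S) \<Gamma>"
    using Q unfolding quantum_CM_def by auto
  have PPT: "P * transpose_mat P = 1\<^sub>m (2*S)"
    using mat_mult_left_right_inverse[OF _ P PP] P by simp
  define Z where "Z = transpose_mat P * Omega S * P"
  have Z: "Z \<in> carrier_mat (2*S) (2*S)" unfolding Z_def using P by auto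
  obtain a where a: "a \<in> carrier_vec (2*S)" "a \<noteq> 0\<^sub>v (2*S)" "\<And>q. q < t \<Longrightarrow> a $ q = 0"
    and Za: "\<And>i. i < j \<Longrightarrow> (Z *\<^sub>v a) $ i = 0"
    using exists_tail_vec_with_tail_image[OF Z tj(1)] by blast
  define u where "u = P *\<^sub>v a"
  define b where "b = Z *\<^sub>v a"
  have u: "u \<in> carrier_vec (2*S)" and b: "b \<in> carrier_vec (2*S)"
    unfolding u_def b_def using P Z a by auto
  have Pb: "P *\<^sub>v b = Omega S *\<^sub>v u"
  proof -
    have "P * Z = P * transpose_mat P * Omega S * P"
      unfolding Z_def using P by (simp add: assoc_mult_mat_dims)
    then have PZ: "P * Z = Omega S * P" unfolding PPT by simp
    have "P *\<^sub>v b = (P * Z) *\<^sub>v a"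
      unfolding b_def using P Z a by (simp add: assoc_mult_mat_vec)
    also have "\<dots> = Omega S *\<^sub>v u"
      unfolding PZ u_def by (rule assoc_mult_mat_vec[OF Omega_carrier P a(1)])
    finally show ?thesis .
  qed
  define s where "s = a \<bullet> a"
  have s: "s > 0" unfolding s_def using conjugate_square_greater_0_vec[OF a(1)] a(2) by simp
  have uu: "u \<bullet> u = s" unfolding u_def s_def using orthogonal_mat_norm[OF P PP a(1)] .
  have "b \<bullet> b = s"
    using orthogonal_mat_norm[OF P PP b] Omega_mult_vec_norm[OF u] uu by (simp add: Pb)
  define \<alpha> where "\<alpha> = u \<bullet> (\<Gamma> *\<^sub>v u)"
  define \<beta> where "\<beta> = (Omega S *\<^sub>v u) \<bullet> (\<Gamma> *\<^sub>v (Omega S *\<^sub>v u))"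
  have "u \<noteq> 0\<^sub>v (2*S)" using uu s by auto
  then have ab: "\<alpha> * \<beta> \<ge> s\<^sup>2" and \<alpha>: "\<alpha> > 0"
    using quantum_CM_uncertainty[OF Q u] pd u uu unfolding \<alpha>_def \<beta>_def pos_def_real_def by auto
  have "\<alpha> \<le> L ! t * s"
    unfolding \<alpha>_def u_def s_def orthogonal_congruence_quadratic_form[OF P G D a(1)]
    by (rule sorted_weighted_sum_le[OF sorted len tj(2) a(1) a(3)])
  moreover have "\<beta> \<le> L ! j * s"
    unfolding \<beta>_def Pb[symmetric] orthogonal_congruence_quadratic_form[OF P G D b] \<open>b \<bullet> b = s\<close>[symmetric]
    by (rule sorted_weighted_sum_le[OF sorted len j b]) (simp add: b_def Za)
  moreover have "\<beta> \<ge> 0"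
  proof (rule ccontr)
    assume "\<not> \<beta> \<ge> 0"
    then have "\<alpha> * \<beta> < 0" using \<alpha> by (simp add: mult_pos_neg)
    then show False using ab by (smt (verit) zero_le_power2)
  qed
  ultimately have "s * s * 1 \<le> s * s * (L ! t * L ! j)"
    using ab \<alpha> mult_mono[of \<alpha> "L ! t * s" \<beta> "L ! j * s"] by (simp add: power2_eq_square algebra_simps)
  then show ?thesis using s unfolding t_def by (simp add: mult_le_cancel_left_pos mult.commute)
qed

lemma quantum_CM_spectrum:
  assumes Q: "quantum_CM S \<Gamma>" and E: "eigenspectrum S \<Gamma> \<Lambda>"
  shows "\<forall>k < 2*S. \<Lambda> ! k > 0" and "\<forall>j < 2*S. \<Lambda> ! j * \<Lambda> ! (2*S - 1 - j) \<ge> 1"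
proof -
  have G: "\<Gamma> \<in> carrier_mat (2*S) (2*S)" and sym: "transpose_mat \<Gamma> = \<Gamma>"
    using Q unfolding quantum_CM_def by auto
  have len: "length \<Lambda> = 2*S" and sorted: "sorted_wrt (\<ge>) \<Lambda>"
    and cp: "char_poly \<Gamma> = (\<Prod>x\<leftarrow>\<Lambda>. [:- x, 1:])"
    using E unfolding eigenspectrum_def by auto
  obtain P where P: "P \<in> carrier_mat (2*S) (2*S)" and PP: "transpose_mat P * P = 1\<^sub>m (2*S)"
    and D: "transpose_mat P * \<Gamma> * P = mat_diag (2*S) (\<lambda>i. \<Lambda> ! i)"
    using symmetric_real_diagonalization[OF G sym cp] by blast
  show "\<forall>k < 2*S. \<Lambda> ! k > 0"
    using quantum_CM_eigenvalue_pos[OF Q P PP D] by blast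
  show "\<forall>j < 2*S. \<Lambda> ! j * \<Lambda> ! (2*S - 1 - j) \<ge> 1"
    using quantum_CM_eigenvalue_pairing[OF Q P PP D sorted len] by blast
qed

section \<open>Perfect matchings of the eigenvalue graph\<close>

definition matching_weight :: "real list \<Rightarrow> (nat \<Rightarrow> nat) \<Rightarrow> real" where
  "matching_weight L m = (\<Sum>i<length L. L ! i * L ! (m i))"

definition antitone_matching :: "real list \<Rightarrow> (nat \<Rightarrow> nat) \<Rightarrow> bool" where
  "antitone_matching L m \<longleftrightarrow>
     (\<forall>i<length L. \<forall>j<length L. L ! i > L ! j \<longrightarrow> L ! (m i) \<le> L ! (m j))"

definition swap_matching :: "(nat \<Rightarrow> nat) \<Rightarrow> nat \<Rightarrow> nat \<Rightarrow> nat \<Rightarrow> nat" where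
  "swap_matching m i j = (\<lambda>x. if x = i then m j else if x = m j then i
     else if x = j then m i else if x = m i then j else m x)"

lemma perfect_matching_swap:
  assumes pm: "perfect_matching L m" and i: "i < length L" and j: "j < length L"
    and distinct: "distinct [i, j, m i, m j]"
    and e1: "L ! i * L ! (m j) \<ge> 1" and e2: "L ! j * L ! (m i) \<ge> 1"
  shows "perfect_matching L (swap_matching m i j)"
  unfolding perfect_matching_def
proof (intro allI impI)
  fix x assume x: "x < length L"
  have mi: "m i < length L" "m (m i) = i" and mj: "m j < length L" "m (m j) = j"
    and mx: "m x < length L" "m (m x) = x" "G_edge L x (m x)"
    using pm i j x unfolding perfect_matching_def by auto
  show "swap_matching m i j x < length L \<and> swap_matching m i j (swap_matching m i j x) = x \<and>
        G_edge L x (swap_matching m i j x)"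
  proof (cases "x \<in> {i, j, m i, m j}")
    case False
    then have "m x \<notin> {i, j, m i, m j}" using mi mj mx by auto
    then show ?thesis using False mx unfolding swap_matching_def by auto
  next
    case True
    then show ?thesis
      using distinct e1 e2 i j mi mj unfolding swap_matching_def by (auto simp: G_edge_def mult.commute)
  qed
qed

lemma matching_weight_swap:
  assumes pm: "perfect_matching L m" and i: "i < length L" and j: "j < length L"
    and distinct: "distinct [i, j, m i, m j]"
  shows "matching_weight L m - matching_weight L (swap_matching m i j)
           = 2 * ((L ! i - L ! j) * (L ! (m i) - L ! (m j)))"
proof -
  let ?K = "{i, j, m i, m j}" and ?m' = "swap_matching m i j"
  have mi: "m i < length L" "m (m i) = i" and mj: "m j < length L" "m (m j) = j"
    using pm i j unfolding perfect_matching_def by auto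
  have split: "(\<Sum>x<length L. g x) = (\<Sum>x\<in>{..<length L} - ?K. g x) + (\<Sum>x\<in>?K. g x)" for g :: "nat \<Rightarrow> real"
    using sum.subset_diff[of ?K "{..<length L}"] i j mi mj by auto
  have rest: "(\<Sum>x\<in>{..<length L} - ?K. L ! x * L ! (?m' x)) = (\<Sum>x\<in>{..<length L} - ?K. L ! x * L ! (m x))"
    by (intro sum.cong) (auto simp: swap_matching_def)
  have "(\<Sum>x\<in>?K. L ! x * L ! (m x)) = 2 * (L ! i * L ! (m i) + L ! j * L ! (m j))"
    using distinct mi mj by (simp add: algebra_simps)
  moreover have "(\<Sum>x\<in>?K. L ! x * L ! (?m' x)) = 2 * (L ! i * L ! (m j) + L ! j * L ! (m i))"
    using distinct by (simp add: swap_matching_def algebra_simps)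
  ultimately show ?thesis
    unfolding matching_weight_def split[of "\<lambda>x. L ! x * L ! (m x)"] split[of "\<lambda>x. L ! x * L ! (?m' x)"] rest
    by (simp add: algebra_simps)
qed

(* Exchanging the partners of an offending pair keeps every edge, since the product condition
   only improves, and strictly lowers the weight. *)
lemma matching_weight_decrease:
  assumes pm: "perfect_matching L m" and pos: "\<forall>k<length L. L ! k > 0"
    and not_antitone: "\<not> antitone_matching L m"
  shows "\<exists>m'. perfect_matching L m' \<and> matching_weight L m' < matching_weight L m"
proof -
  obtain i j where i: "i < length L" and j: "j < length L"
    and lij: "L ! i > L ! j" and mij: "L ! (m i) > L ! (m j)"
    using not_antitone unfolding antitone_matching_def by (auto simp: not_le)
  have mi: "m i < length L" "m (m i) = i" "G_edge L i (m i)" and mj: "m j < length L" "m (m j) = j" "G_edge L j (m j)"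
    using pm i j unfolding perfect_matching_def by auto
  have "i \<noteq> m j"
  proof
    assume "i = m j"
    then have "m i = j" using mj by simp
    then show False using lij mij \<open>i = m j\<close> by simp
  qed
  moreover have "j \<noteq> m i"
  proof
    assume "j = m i"
    then have "m j = i" using mi by simp
    then show False using lij mij \<open>j = m i\<close> by simp
  qed
  moreover have "i \<noteq> m i" "j \<noteq> m j" using mi mj unfolding G_edge_def by auto
  ultimately have distinct: "distinct [i, j, m i, m j]" using lij mij by auto
  have ej: "L ! j * L ! (m j) \<ge> 1" and pj: "L ! j > 0" "L ! (m j) > 0"
    using mj pos j by (auto simp: G_edge_def)
  have "L ! j * L ! (m j) \<le> L ! i * L ! (m j)" using lij pj by (intro mult_right_mono) auto
  moreover have "L ! j * L ! (m j) \<le> L ! j * L ! (m i)" using mij pj by (intro mult_left_mono) auto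
  ultimately have "L ! i * L ! (m j) \<ge> 1" "L ! j * L ! (m i) \<ge> 1" using ej by linarith+
  then have "perfect_matching L (swap_matching m i j)"
    using perfect_matching_swap[OF pm i j distinct] by simp
  moreover have "matching_weight L (swap_matching m i j) < matching_weight L m"
  proof -
    have "(L ! i - L ! j) * (L ! (m i) - L ! (m j)) > 0" using lij mij by simp
    then show ?thesis using matching_weight_swap[OF pm i j distinct] by linarith
  qed
  ultimately show ?thesis by blast
qed

definition order_rank :: "('a \<Rightarrow> 'a \<Rightarrow> bool) \<Rightarrow> 'a set \<Rightarrow> 'a \<Rightarrow> nat" where
  "order_rank R A i = card {x \<in> A. R x i}"

lemma order_rank_strict_mono:
  assumes "finite A" "irreflp R" "transp R" "a \<in> A" "R a b"
  shows "order_rank R A a < order_rank R A b"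
proof -
  have "{x \<in> A. R x a} \<subset> {x \<in> A. R x b}"
    using assms by (blast dest: irreflpD transpD)
  then show ?thesis unfolding order_rank_def by (intro psubset_card_mono) (use assms in auto)
qed

lemma order_rank_bij_betw:
  assumes fin: "finite A" and irr: "irreflp R" and trans: "transp R" and total: "totalp_on A R"
  shows "bij_betw (order_rank R A) A {0..<card A}"
proof -
  have "order_rank R A i < card A" if "i \<in> A" for i
  proof -
    have "order_rank R A i \<le> card (A - {i})"
      unfolding order_rank_def by (intro card_mono) (use fin irr in \<open>auto dest: irreflpD\<close>)
    then show ?thesis using that fin card_gt_0_iff[of A] by auto
  qed
  moreover have inj: "inj_on (order_rank R A) A"
  proof (rule inj_onI)
    fix i j assume ij: "i \<in> A" "j \<in> A" and eq: "order_rank R A i = order_rank R A j"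
    show "i = j"
    proof (rule ccontr)
      assume "i \<noteq> j"
      then have "R i j \<or> R j i" using totalp_onD[OF total ij] by blast
      then show False using order_rank_strict_mono[OF fin irr trans] ij eq by fastforce
    qed
  qed
  ultimately have "order_rank R A ` A \<subseteq> {0..<card A}" "card (order_rank R A ` A) = card {0..<card A}"
    by (auto simp: card_image)
  then show ?thesis unfolding bij_betw_def using inj by (simp add: card_subset_eq)
qed

lemma order_rank_involution:
  assumes fin: "finite A" and irr: "irreflp R" and trans: "transp R" and total: "totalp_on A R"
    and m: "\<And>i. i \<in> A \<Longrightarrow> m i \<in> A \<and> m (m i) = i"
    and reverse: "\<And>i j. i \<in> A \<Longrightarrow> j \<in> A \<Longrightarrow> R i j \<Longrightarrow> R (m j) (m i)"
    and i: "i \<in> A"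
  shows "order_rank R A (m i) = card A - 1 - order_rank R A i"
proof -
  have "{x \<in> A. R x (m i)} = m ` {y \<in> A. R i y}"
  proof
    show "{x \<in> A. R x (m i)} \<subseteq> m ` {y \<in> A. R i y}"
    proof
      fix x assume x: "x \<in> {x \<in> A. R x (m i)}"
      then have "R (m (m i)) (m x)" using reverse m i by blast
      then show "x \<in> m ` {y \<in> A. R i y}" using m i x by (intro image_eqI[of x m "m x"]) auto
    qed
    show "m ` {y \<in> A. R i y} \<subseteq> {x \<in> A. R x (m i)}" using reverse m i by blast
  qed
  moreover have "inj_on m A" by (rule inj_onI) (metis m)
  ultimately have "order_rank R A (m i) = card {y \<in> A. R i y}"
    unfolding order_rank_def by (simp add: card_image inj_on_subset)
  also have "{y \<in> A. R i y} = (A - {i}) - {x \<in> A. R x i}"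
    using totalp_onD[OF total i] irreflpD[OF irr] transpD[OF trans] by blast
  also have "card \<dots> = card A - 1 - order_rank R A i"
    unfolding order_rank_def using fin irreflpD[OF irr] i by (subst card_Diff_subset) auto
  finally show ?thesis .
qed

lemma nth_order_rank:
  fixes L :: "real list"
  assumes sorted: "sorted_wrt (\<ge>) L" and irr: "\<And>i. \<not> R i i"
    and greater: "\<And>i j. L ! i > L ! j \<Longrightarrow> R i j" and ge: "\<And>i j. R i j \<Longrightarrow> L ! i \<ge> L ! j"
    and i: "i < length L"
  shows "L ! order_rank R {0..<length L} i = L ! i"
proof -
  define k where "k = order_rank R {0..<length L} i"
  define Gt where "Gt = {x \<in> {0..<length L}. L ! x > L ! i}"
  define Ge where "Ge = {x \<in> {0..<length L}. L ! x \<ge> L ! i}"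
  have "card Gt \<le> k"
    unfolding k_def order_rank_def Gt_def by (intro card_mono) (auto intro: greater)
  have "k \<le> card (Ge - {i})"
    unfolding k_def order_rank_def Ge_def by (intro card_mono) (auto dest: ge simp: irr)
  moreover have "i \<in> Ge" "finite Ge" using i unfolding Ge_def by auto
  ultimately have "k < card Ge" using card_Diff1_less[of Ge i] by linarith
  have sorted_le: "L ! y \<le> L ! x" if "x \<le> y" "y < length L" for x y
    using sorted that by (cases "x = y") (auto simp: sorted_wrt_iff_nth_less)
  have "L ! k \<ge> L ! i"
  proof (rule ccontr)
    assume "\<not> L ! k \<ge> L ! i"
    then have "Ge \<subseteq> {0..<k}"
      unfolding Ge_def using sorted_le[of k] by (auto simp: not_le) (meson less_le_trans not_le)
    then show False using card_mono[of "{0..<k}" Ge] \<open>k < card Ge\<close> by simp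
  qed
  moreover have "k < length L"
  proof -
    have "Ge \<subseteq> {0..<length L}" unfolding Ge_def by auto
    then show ?thesis using \<open>k < card Ge\<close> card_mono[of "{0..<length L}" Ge] by simp
  qed
  moreover have "L ! k \<le> L ! i"
  proof (rule ccontr)
    assume "\<not> L ! k \<le> L ! i"
    then have "{0..<k+1} \<subseteq> Gt"
      unfolding Gt_def using sorted_le[of _ k] \<open>k < length L\<close> by (auto simp: not_le less_Suc_eq_le)
        (meson less_le_trans)
    then show False using card_mono[of Gt "{0..<k+1}"] \<open>card Gt \<le> k\<close> unfolding Gt_def by simp
  qed
  ultimately show ?thesis unfolding k_def by simp
qed

(* Sort the vertices by decreasing eigenvalue, break ties by increasing partner eigenvalue and
   then by a key that m reverses.  An antitone matching reverses this strict total order, so on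
   ranks it becomes the matching r |-> 2S - 1 - r. *)
lemma antitone_matching_rank:
  assumes pm: "perfect_matching L m" and anti: "antitone_matching L m" and sorted: "sorted_wrt (\<ge>) L"
  obtains r where "bij_betw r {0..<length L} {0..<length L}" "\<And>i. i < length L \<Longrightarrow> L ! r i = L ! i"
    "\<And>i. i < length L \<Longrightarrow> r (m i) = length L - 1 - r i"
proof -
  define n where "n = length L"
  define A where "A = {0..<n}"
  have mA: "m i \<in> A \<and> m (m i) = i \<and> m i \<noteq> i" if "i \<in> A" for i
    using pm that unfolding perfect_matching_def G_edge_def A_def n_def by fastforce
  define key where "key i = (if i < m i then i else 2*n - m i)" for i
  have key_m: "key (m i) = 2*n - key i" and key_le: "key i \<le> 2*n" if "i \<in> A" for i
    using mA[OF that] that unfolding key_def A_def by auto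
  have key_inj: "i = j" if "i \<in> A" "j \<in> A" "key i = key j" for i j
  proof -
    have "m i < n" "m j < n" "m (m i) = i" "m (m j) = j" "i < n" "j < n"
      using mA that unfolding A_def by auto
    moreover have "i = j" if "2*n - m i = 2*n - m j" "m i < n" "m j < n" "m (m i) = i" "m (m j) = j"
      using that by (metis diff_diff_cancel less_imp_le_nat mult_2 trans_le_add1)
    ultimately show ?thesis using that(3) unfolding key_def by (auto split: if_splits)
  qed
  define R where "R i j \<longleftrightarrow> L ! i > L ! j \<or> (L ! i = L ! j \<and>
      (L ! (m i) < L ! (m j) \<or> (L ! (m i) = L ! (m j) \<and> key i < key j)))" for i j
  have irr: "irreflp R" by (rule irreflpI) (auto simp: R_def)
  have trans: "transp R" by (rule transpI) (auto simp: R_def)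
  have total: "totalp_on A R"
  proof (rule totalp_onI)
    fix i j assume "i \<in> A" "j \<in> A" "i \<noteq> j"
    then have "key i \<noteq> key j" using key_inj by blast
    then show "R i j \<or> R j i" unfolding R_def by auto
  qed
  have reverse: "R (m j) (m i)" if "i \<in> A" "j \<in> A" "R i j" for i j
  proof -
    have "L ! i > L ! j \<Longrightarrow> L ! (m i) \<le> L ! (m j)"
      using anti that unfolding antitone_matching_def A_def n_def by auto
    then show ?thesis
      using that key_le[OF that(1)] key_le[OF that(2)] mA[OF that(1)] mA[OF that(2)]
      unfolding R_def key_m[OF that(1)] key_m[OF that(2)] by auto
  qed
  show ?thesis
  proof
    show "bij_betw (order_rank R A) {0..<length L} {0..<length L}"
      using order_rank_bij_betw[OF _ irr trans total] unfolding A_def n_def by simp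
    show "L ! order_rank R A i = L ! i" if "i < length L" for i
      unfolding A_def n_def by (rule nth_order_rank[OF sorted _ _ _ that]) (auto simp: R_def irr irreflpD)
    show "order_rank R A (m i) = length L - 1 - order_rank R A i" if "i < length L" for i
      using order_rank_involution[where m = m, OF _ irr trans total _ reverse] mA that
      unfolding A_def n_def by simp
  qed
qed

lemma antitone_matchings_equiv:
  assumes pm1: "perfect_matching L m1" and anti1: "antitone_matching L m1"
    and pm2: "perfect_matching L m2" and anti2: "antitone_matching L m2" and sorted: "sorted_wrt (\<ge>) L"
  shows "matching_equiv L m1 m2"
proof -
  define A where "A = {0..<length L}"
  obtain r1 where r1: "bij_betw r1 A A" "\<And>i. i \<in> A \<Longrightarrow> L ! (r1 i) = L ! i"
    "\<And>i. i \<in> A \<Longrightarrow> r1 (m1 i) = length L - 1 - r1 i"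
    using antitone_matching_rank[OF pm1 anti1 sorted] unfolding A_def by auto
  obtain r2 where r2: "bij_betw r2 A A" "\<And>i. i \<in> A \<Longrightarrow> L ! (r2 i) = L ! i"
    "\<And>i. i \<in> A \<Longrightarrow> r2 (m2 i) = length L - 1 - r2 i"
    using antitone_matching_rank[OF pm2 anti2 sorted] unfolding A_def by auto
  define \<sigma> where "\<sigma> i = inv_into A r2 (r1 i)" for i
  have \<sigma>: "bij_betw \<sigma> A A"
    unfolding \<sigma>_def using bij_betw_trans[OF r1(1) bij_betw_inv_into[OF r2(1)]] by (simp add: comp_def)
  have \<sigma>A: "\<sigma> i \<in> A" if "i \<in> A" for i using \<sigma> that bij_betwE by blast
  have r2\<sigma>: "r2 (\<sigma> i) = r1 i" if "i \<in> A" for i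
    unfolding \<sigma>_def using r1(1) r2(1) that by (intro f_inv_into_f) (auto simp: bij_betw_def)
  have m1A: "m1 i \<in> A" and m2A: "m2 i \<in> A" if "i \<in> A" for i
    using pm1 pm2 that unfolding perfect_matching_def A_def by auto
  show ?thesis unfolding matching_equiv_def
  proof (intro exI[of _ \<sigma>] conjI allI impI)
    show "bij_betw \<sigma> {0..<length L} {0..<length L}" using \<sigma> unfolding A_def .
  next
    fix i assume "i < length L"
    then have i: "i \<in> A" unfolding A_def by simp
    show "L ! \<sigma> i = L ! i" using r2(2)[OF \<sigma>A[OF i]] r2\<sigma>[OF i] r1(2)[OF i] by simp
    have "r2 (m2 (\<sigma> i)) = r2 (\<sigma> (m1 i))"
      using r2(3)[OF \<sigma>A[OF i]] r2\<sigma>[OF i] r2\<sigma>[OF m1A[OF i]] r1(3)[OF i] by simp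
    then show "m2 (\<sigma> i) = \<sigma> (m1 i)"
      using r2(1) m2A[OF \<sigma>A[OF i]] \<sigma>A[OF m1A[OF i]] unfolding bij_betw_def by (auto dest: inj_onD)
  qed
qed

(* The reversal i |-> 2S - 1 - i is a perfect matching, so a non-unique pairing means two
   inequivalent matchings; they cannot both be antitone, and the non-antitone one can be improved. *)
lemma non_unique_pairing_weights_differ:
  assumes sorted: "sorted_wrt (\<ge>) L" and pos: "\<forall>k<length L. L ! k > 0"
    and reversal: "\<forall>j<length L. L ! j * L ! (length L - 1 - j) \<ge> 1" and ev: "even (length L)"
    and non_unique: "\<not> unique_pairing L"
  obtains m1 m2 where "perfect_matching L m1" "perfect_matching L m2"
    "matching_weight L m1 < matching_weight L m2"
proof -
  have "perfect_matching L (\<lambda>i. length L - 1 - i)"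
    unfolding perfect_matching_def G_edge_def using reversal ev by auto presburger
  then obtain m1 m2 where pm1: "perfect_matching L m1" and pm2: "perfect_matching L m2"
    and ne: "\<not> matching_equiv L m1 m2"
    using non_unique unfolding unique_pairing_def by blast
  then obtain m where "perfect_matching L m" "\<not> antitone_matching L m"
    using antitone_matchings_equiv[OF pm1 _ pm2 _ sorted] by blast
  then show ?thesis using matching_weight_decrease[OF _ pos] that by blast
qed

section \<open>A symplectic invariant determining the sum of squared thermal parameters\<close>

definition mat_trace :: "'a :: comm_ring mat \<Rightarrow> 'a" where
  "mat_trace M = (\<Sum>i<dim_row M. M $$ (i, i))"

lemma mat_trace_mult_comm:
  assumes A: "A \<in> carrier_mat n m" and B: "B \<in> carrier_mat m n"
  shows "mat_trace (A * B) = mat_trace (B * A)"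
proof -
  have "mat_trace (A * B) = (\<Sum>i<n. \<Sum>k<m. A $$ (i, k) * B $$ (k, i))"
    unfolding mat_trace_def using A B by (auto simp: scalar_prod_def lessThan_atLeast0 intro!: sum.cong)
  also have "\<dots> = (\<Sum>k<m. \<Sum>i<n. B $$ (k, i) * A $$ (i, k))"
    by (subst sum.swap) (simp add: mult.commute)
  also have "\<dots> = mat_trace (B * A)"
    unfolding mat_trace_def using A B by (auto simp: scalar_prod_def lessThan_atLeast0 intro!: sum.cong)
  finally show ?thesis .
qed

lemma sum_lessThan_pairs: "(\<Sum>i<2*(S::nat). g i) = (\<Sum>k<S. g (2*k) + g (2*k+1))"
  by (induct S) (auto simp: sum.distrib ac_simps)

lemma trace_symplectic_congruence:
  fixes Om R X :: "'a :: comm_ring mat"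
  assumes Om: "Om \<in> carrier_mat n n" and R: "R \<in> carrier_mat n n" and X: "X \<in> carrier_mat n n"
    and symplectic: "transpose_mat R * Om * R = Om"
  shows "mat_trace (Om * (R * X * transpose_mat R) * Om * (R * X * transpose_mat R))
           = mat_trace (Om * X * Om * X)"
proof -
  have RT: "transpose_mat R \<in> carrier_mat n n" using R by simp
  define Y where "Y = Om * R * X * transpose_mat R * Om * R * X"
  have Y: "Y \<in> carrier_mat n n" unfolding Y_def using Om R X RT by auto
  have "Om * (R * X * transpose_mat R) * Om * (R * X * transpose_mat R) = Y * transpose_mat R"
    unfolding Y_def using Om R X RT by (simp add: assoc_mult_mat_dims)
  then have "mat_trace (Om * (R * X * transpose_mat R) * Om * (R * X * transpose_mat R))
      = mat_trace (transpose_mat R * Y)"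
    using mat_trace_mult_comm[OF Y RT] by simp
  also have "transpose_mat R * Y = (transpose_mat R * Om * R) * X * (transpose_mat R * Om * R) * X"
    unfolding Y_def using Om R X RT by (simp add: assoc_mult_mat_dims)
  finally show ?thesis unfolding symplectic .
qed

lemma SpO_D:
  assumes "W \<in> SpO S"
  shows "W \<in> carrier_mat (2*S) (2*S)" and "W * transpose_mat W = 1\<^sub>m (2*S)"
    and "transpose_mat W * Omega S * W = Omega S"
proof -
  show W: "W \<in> carrier_mat (2*S) (2*S)" using assms unfolding SpO_def by auto
  have WW: "transpose_mat W * W = 1\<^sub>m (2*S)" and sym: "W * Omega S * transpose_mat W = Omega S"
    using assms unfolding SpO_def by auto
  show WW': "W * transpose_mat W = 1\<^sub>m (2*S)"
    using mat_mult_left_right_inverse[OF _ W WW] W by simp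
  have "transpose_mat W * Omega S * W = transpose_mat W * (W * Omega S * transpose_mat W) * W"
    unfolding sym ..
  also have "\<dots> = (transpose_mat W * W) * Omega S * (transpose_mat W * W)"
    using W by (simp add: assoc_mult_mat_dims)
  finally show "transpose_mat W * Omega S * W = Omega S" using WW by simp
qed

lemma one_SpO: "1\<^sub>m (2*S) \<in> SpO S"
  unfolding SpO_def using Omega_carrier[of S] by simp

lemma Qmat_mat_diag:
  "Qmat S r = mat_diag (2*S) (\<lambda>i. if even i then exp (r ! (i div 2)) else exp (- (r ! (i div 2))))"
  by (rule eq_matI) (auto simp: Qmat_def)

lemma Tmat_mat_diag: "Tmat S \<nu> = mat_diag (2*S) (\<lambda>i. \<nu> ! (i div 2))"
  by (rule eq_matI) (auto simp: Tmat_def)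

lemma dim_Qmat[simp]: "dim_row (Qmat S r) = 2*S" "dim_col (Qmat S r) = 2*S"
  by (simp_all add: Qmat_def)

lemma dim_Tmat[simp]: "dim_row (Tmat S \<nu>) = 2*S" "dim_col (Tmat S \<nu>) = 2*S"
  by (simp_all add: Tmat_def)

lemma Qmat_symplectic: "transpose_mat (Qmat S r) * Omega S * Qmat S r = Omega S"
proof (rule eq_matI)
  define q where "q i = (if even i then exp (r ! (i div 2)) else exp (- (r ! (i div 2))))" for i
  fix i j assume "i < dim_row (Omega S)" "j < dim_col (Omega S)"
  then have i: "i < 2*S" and j: "j < 2*S" by auto
  have "(transpose_mat (Qmat S r) * Omega S * Qmat S r) $$ (i, j) = q i * Omega S $$ (i, j) * q j"
    unfolding Qmat_mat_diag transpose_mat_diag q_def[symmetric] using i j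
    by (simp add: mat_diag_mult_left[OF Omega_carrier] mat_diag_mult_right[of _ "2*S"])
  also have "\<dots> = Omega S $$ (i, j)"
  proof (cases "Omega S $$ (i, j) = 0")
    case False
    then have "(even i \<and> j = i + 1) \<or> (odd i \<and> i = j + 1)"
      using i j by (auto simp: Omega_index split: if_splits)
    then have "q i * q j = 1" by (auto simp: q_def exp_minus elim: oddE)
    then show ?thesis by (metis mult.commute mult.left_commute mult.right_neutral)
  qed simp
  finally show "(transpose_mat (Qmat S r) * Omega S * Qmat S r) $$ (i, j) = Omega S $$ (i, j)" .
qed (auto simp: Qmat_def)

(* Omega T Omega T is diagonal with entries -nu_k^2, each mode contributing twice. *)
lemma trace_Omega_Tmat:
  "mat_trace (Omega S * Tmat S \<nu> * Omega S * Tmat S \<nu>) = - 2 * (\<Sum>k<S. (\<nu> ! k)\<^sup>2)"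
proof -
  define t where "t i = \<nu> ! (i div 2)" for i
  define OT where "OT = Omega S * Tmat S \<nu>"
  have OT: "OT = mat (2*S) (2*S) (\<lambda>(i, j). Omega S $$ (i, j) * t j)"
    unfolding OT_def Tmat_mat_diag t_def by (rule mat_diag_mult_right) simp
  have diag: "(OT * OT) $$ (i, i) = - (t i)\<^sup>2" if i: "i < 2*S" for i
  proof -
    have "(OT * OT) $$ (i, i) = (\<Sum>q\<in>{0..<2*S}. (Omega S $$ (i, q) * t q) * (Omega S $$ (q, i) * t i))"
      unfolding OT using i by (simp add: scalar_prod_def)
    also have "\<dots> = (\<Sum>q\<in>{0..<2*S}. of_real (Omega S $$ (i, q)) * (t q * Omega S $$ (q, i) * t i))"
      by (rule sum.cong) (simp_all add: mult.assoc)
    also have "\<dots> = (if even i then t (i + 1) * Omega S $$ (i + 1, i) * t i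
                      else - (t (i - 1) * Omega S $$ (i - 1, i) * t i))"
      by (rule Omega_row_sum[OF i])
    also have "\<dots> = - (t i)\<^sup>2"
    proof (cases "even i")
      case True
      then have "i + 1 < 2*S" "(i + 1) div 2 = i div 2" using i by presburger+
      then have "i + 1 < 2*S" "t (i + 1) = t i" unfolding t_def by simp_all
      then show ?thesis using True by (simp add: Omega_index power2_eq_square)
    next
      case False
      then have "i - 1 < 2*S" "(i - 1) div 2 = i div 2" "even (i - 1)" "i - 1 + 1 = i"
        using i by presburger+
      then have "i - 1 < 2*S" "t (i - 1) = t i" "even (i - 1)" "i - 1 + 1 = i"
        unfolding t_def by simp_all
      then show ?thesis using False i by (simp add: Omega_index power2_eq_square)
    qed
    finally show ?thesis .
  qed
  have "mat_trace (Omega S * Tmat S \<nu> * Omega S * Tmat S \<nu>) = mat_trace (OT * OT)"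
    unfolding OT_def by (simp add: assoc_mult_mat_dims Tmat_mat_diag)
  also have "\<dots> = (\<Sum>i<2*S. - (t i)\<^sup>2)"
  proof -
    have "dim_row (OT * OT) = 2*S" unfolding OT by simp
    then show ?thesis unfolding mat_trace_def using diag by (intro sum.cong) auto
  qed
  also have "\<dots> = - 2 * (\<Sum>k<S. (\<nu> ! k)\<^sup>2)"
    unfolding sum_lessThan_pairs t_def by (simp add: sum_distrib_left sum_negf)
  finally show ?thesis .
qed

lemma CM_params_trace:
  assumes "(\<nu>, r) \<in> CM_params S \<Gamma>"
  shows "mat_trace (Omega S * \<Gamma> * Omega S * \<Gamma>) = - 2 * (\<Sum>k<S. (\<nu> ! k)\<^sup>2)"
proof -
  obtain K L where K: "K \<in> SpO S" and L: "L \<in> SpO S"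
    and G: "\<Gamma> = K * Qmat S r * L * Tmat S \<nu> * transpose_mat L * Qmat S r * transpose_mat K"
    using assms unfolding CM_params_def is_decomposition_def by auto
  note K = SpO_D[OF K] and L = SpO_D[OF L]
  have Q: "Qmat S r \<in> carrier_mat (2*S) (2*S)" and QT: "transpose_mat (Qmat S r) = Qmat S r"
    and T: "Tmat S \<nu> \<in> carrier_mat (2*S) (2*S)"
    by (simp_all add: Qmat_mat_diag Tmat_mat_diag)
  define X1 where "X1 = L * Tmat S \<nu> * transpose_mat L"
  define X2 where "X2 = Qmat S r * X1 * transpose_mat (Qmat S r)"
  have X1: "X1 \<in> carrier_mat (2*S) (2*S)" unfolding X1_def using L T by auto
  have X2: "X2 \<in> carrier_mat (2*S) (2*S)" unfolding X2_def using Q X1 by auto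
  have "\<Gamma> = K * X2 * transpose_mat K"
    unfolding G X2_def X1_def QT using K L Q T by (simp add: assoc_mult_mat_dims)
  then have "mat_trace (Omega S * \<Gamma> * Omega S * \<Gamma>) = mat_trace (Omega S * X2 * Omega S * X2)"
    using trace_symplectic_congruence[OF Omega_carrier K(1) X2 K(3)] by simp
  also have "\<dots> = mat_trace (Omega S * X1 * Omega S * X1)"
    unfolding X2_def by (rule trace_symplectic_congruence[OF Omega_carrier Q X1]) (use Qmat_symplectic[of S r] QT in simp)
  also have "\<dots> = mat_trace (Omega S * Tmat S \<nu> * Omega S * Tmat S \<nu>)"
    unfolding X1_def by (rule trace_symplectic_congruence[OF Omega_carrier L(1) T L(3)])
  finally show ?thesis unfolding trace_Omega_Tmat .
qed

section \<open>Diagonal covariance matrices\<close>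

lemma pos_def_mat_diag:
  assumes "\<And>i. i < n \<Longrightarrow> d i > 0"
  shows "pos_def_real n (mat_diag n d)"
  unfolding pos_def_real_def
proof (intro ballI impI)
  fix v :: "real vec" assume v: "v \<in> carrier_vec n" and v0: "v \<noteq> 0\<^sub>v n"
  obtain q where q: "q < n" "v $ q \<noteq> 0"
    using v v0 by (metis carrier_vecD eq_vecI index_zero_vec(1,2))
  have "v $ q * v $ q > 0" using q(2) by (simp add: zero_less_mult_iff linorder_neq_iff disj_commute)
  then have "0 < d q * (v $ q * v $ q)" using assms[OF q(1)] by simp
  also have "\<dots> \<le> (\<Sum>i<n. d i * (v $ i * v $ i))"
  proof (rule member_le_sum)
    show "0 \<le> d i * (v $ i * v $ i)" if "i \<in> {..<n} - {q}" for i
      using assms[of i] that by (simp add: less_imp_le)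
  qed (use q in auto)
  finally show "v \<bullet> (mat_diag n d *\<^sub>v v) > 0" by (simp add: mat_diag_quadratic_form[OF v])
qed

lemma diag_plus_i_Omega_mult_vec_index:
  fixes v :: "complex vec"
  assumes v: "v \<in> carrier_vec (2*S)" and p: "p < 2*S"
  shows "((map_mat complex_of_real (mat_diag (2*S) d) + \<i> \<cdot>\<^sub>m map_mat complex_of_real (Omega S)) *\<^sub>v v) $ p
    = complex_of_real (d p) * v $ p + \<i> * (if even p then v $ (p + 1) else - v $ (p - 1))"
proof -
  let ?M = "map_mat complex_of_real (mat_diag (2*S) d) + \<i> \<cdot>\<^sub>m map_mat complex_of_real (Omega S)"
  have "(?M *\<^sub>v v) $ p = (\<Sum>q\<in>{0..<2*S}. ?M $$ (p, q) * v $ q)"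
    using p v by (auto simp: scalar_prod_def intro!: sum.cong)
  also have "\<dots> = (\<Sum>q\<in>{0..<2*S}. (if p = q then complex_of_real (d p) * v $ q else 0)
      + \<i> * (complex_of_real (Omega S $$ (p, q)) * v $ q))"
    by (intro sum.cong) (use p in \<open>auto simp: algebra_simps\<close>)
  also have "\<dots> = complex_of_real (d p) * v $ p
      + \<i> * (\<Sum>q\<in>{0..<2*S}. complex_of_real (Omega S $$ (p, q)) * v $ q)"
    using p by (simp add: sum.distrib sum_distrib_left)
  finally show ?thesis using Omega_row_sum[OF p, where v = "\<lambda>q. v $ q"] by simp
qed

lemma mode_form_nonneg:
  fixes x y :: complex and a b :: real
  assumes a: "a > 0" and ab: "a * b \<ge> 1"
  shows "cnj x * (complex_of_real a * x + \<i> * y) + cnj y * (complex_of_real b * y + \<i> * (- x))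
    = complex_of_real (a * (Re x * Re x + Im x * Im x) + b * (Re y * Re y + Im y * Im y)
        - 2 * (Re x * Im y - Im x * Re y))"
    and "a * (Re x * Re x + Im x * Im x) + b * (Re y * Re y + Im y * Im y) - 2 * (Re x * Im y - Im x * Re y) \<ge> 0"
proof -
  show "cnj x * (complex_of_real a * x + \<i> * y) + cnj y * (complex_of_real b * y + \<i> * (- x))
    = complex_of_real (a * (Re x * Re x + Im x * Im x) + b * (Re y * Re y + Im y * Im y)
        - 2 * (Re x * Im y - Im x * Re y))"
    by (simp add: complex_eq_iff algebra_simps)
  have "a * (a * (Re x * Re x + Im x * Im x) + b * (Re y * Re y + Im y * Im y) - 2 * (Re x * Im y - Im x * Re y))
      = (a * Re x - Im y)\<^sup>2 + (a * Im x + Re y)\<^sup>2 + (a * b - 1) * (Re y * Re y + Im y * Im y)"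
    by (simp add: power2_eq_square algebra_simps)
  also have "\<dots> \<ge> 0"
  proof -
    have "(a * b - 1) * (Re y * Re y + Im y * Im y) \<ge> 0" using ab by (intro mult_nonneg_nonneg) auto
    then show ?thesis by simp
  qed
  finally show "a * (Re x * Re x + Im x * Im x) + b * (Re y * Re y + Im y * Im y)
      - 2 * (Re x * Im y - Im x * Re y) \<ge> 0"
    using a by (simp add: zero_le_mult_iff)
qed

lemma psd_diag_plus_i_Omega:
  assumes pos: "\<And>k. k < S \<Longrightarrow> d (2*k) > 0 \<and> d (2*k) * d (2*k+1) \<ge> 1"
  shows "psd_complex (2*S) (map_mat complex_of_real (mat_diag (2*S) d) + \<i> \<cdot>\<^sub>m map_mat complex_of_real (Omega S))"
  unfolding psd_complex_def
proof (intro conjI ballI)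
  let ?M = "map_mat complex_of_real (mat_diag (2*S) d) + \<i> \<cdot>\<^sub>m map_mat complex_of_real (Omega S)"
  show M: "?M \<in> carrier_mat (2*S) (2*S)" by auto
  fix v :: "complex vec" assume v: "v \<in> carrier_vec (2*S)"
  define c where "c k = d (2*k) * (Re (v $ (2*k)) * Re (v $ (2*k)) + Im (v $ (2*k)) * Im (v $ (2*k)))
     + d (2*k+1) * (Re (v $ (2*k+1)) * Re (v $ (2*k+1)) + Im (v $ (2*k+1)) * Im (v $ (2*k+1)))
     - 2 * (Re (v $ (2*k)) * Im (v $ (2*k+1)) - Im (v $ (2*k)) * Re (v $ (2*k+1)))" for k
  have "conjugate v \<bullet> (?M *\<^sub>v v) = (\<Sum>p<2*S. cnj (v $ p) * (?M *\<^sub>v v) $ p)"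
    using v M by (auto simp: scalar_prod_def conjugate_vec_def lessThan_atLeast0 intro!: sum.cong)
  also have "\<dots> = (\<Sum>k<S. cnj (v $ (2*k)) * (?M *\<^sub>v v) $ (2*k) + cnj (v $ (2*k+1)) * (?M *\<^sub>v v) $ (2*k+1))"
    by (rule sum_lessThan_pairs)
  also have "\<dots> = (\<Sum>k<S. complex_of_real (c k))"
  proof (rule sum.cong[OF refl])
    fix k assume "k \<in> {..<S}"
    then show "cnj (v $ (2*k)) * (?M *\<^sub>v v) $ (2*k) + cnj (v $ (2*k+1)) * (?M *\<^sub>v v) $ (2*k+1)
        = complex_of_real (c k)"
      unfolding c_def using pos diag_plus_i_Omega_mult_vec_index[OF v] mode_form_nonneg(1) by simp
  qed
  finally have eq: "conjugate v \<bullet> (?M *\<^sub>v v) = complex_of_real (\<Sum>k<S. c k)" by simp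
  show "conjugate v \<bullet> (?M *\<^sub>v v) \<in> \<real>" unfolding eq by simp
  have "(\<Sum>k<S. c k) \<ge> 0"
    unfolding c_def using pos mode_form_nonneg(2) by (intro sum_nonneg) auto
  then show "Re (conjugate v \<bullet> (?M *\<^sub>v v)) \<ge> 0" unfolding eq by simp
qed

lemma quantum_CM_mat_diag:
  assumes pos: "\<And>i. i < 2*S \<Longrightarrow> d i > 0" and pair: "\<And>k. k < S \<Longrightarrow> d (2*k) * d (2*k+1) \<ge> 1"
  shows "quantum_CM S (mat_diag (2*S) d)"
  unfolding quantum_CM_def
  using pos_def_mat_diag[OF pos] psd_diag_plus_i_Omega[of S d] pos pair by simp

definition diag_thermal :: "nat \<Rightarrow> (nat \<Rightarrow> real) \<Rightarrow> real list" where
  "diag_thermal S d = map (\<lambda>k. sqrt (d (2*k) * d (2*k+1))) [0..<S]"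

definition diag_squeezing :: "nat \<Rightarrow> (nat \<Rightarrow> real) \<Rightarrow> real list" where
  "diag_squeezing S d = map (\<lambda>k. ln (d (2*k) / d (2*k+1)) / 4) [0..<S]"

lemma mat_diag_cong: "(\<And>i. i < n \<Longrightarrow> f i = g i) \<Longrightarrow> mat_diag n f = mat_diag n g"
  by (rule eq_matI) auto

lemma exp_quarter_ln_ratio:
  fixes a b :: real
  assumes a: "a > 0" and b: "b > 0"
  shows "exp (ln (a/b) / 4) * sqrt (a*b) * exp (ln (a/b) / 4) = a"
    and "exp (- (ln (a/b) / 4)) * sqrt (a*b) * exp (- (ln (a/b) / 4)) = b"
proof -
  have sq: "exp (ln y / 2) = sqrt y" if "y > 0" for y :: real
    using that by (simp add: powr_half_sqrt[symmetric] powr_def)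
  have "exp (ln (a/b) / 4) * exp (ln (a/b) / 4) = sqrt (a/b)"
    using a b by (simp add: sq flip: exp_add)
  then have "exp (ln (a/b) / 4) * sqrt (a*b) * exp (ln (a/b) / 4) = sqrt (a/b) * sqrt (a*b)"
    by (simp add: algebra_simps)
  also have "\<dots> = a" using a b by (simp flip: real_sqrt_mult)
  finally show "exp (ln (a/b) / 4) * sqrt (a*b) * exp (ln (a/b) / 4) = a" .
  have "exp (- (ln (a/b) / 4)) * exp (- (ln (a/b) / 4)) = exp (ln (b/a) / 2)"
    using a b by (simp add: ln_div field_simps flip: exp_add)
  also have "\<dots> = sqrt (b/a)" using a b by (intro sq) simp
  finally have "exp (- (ln (a/b) / 4)) * exp (- (ln (a/b) / 4)) = sqrt (b/a)" .
  then have "exp (- (ln (a/b) / 4)) * sqrt (a*b) * exp (- (ln (a/b) / 4)) = sqrt (b/a) * sqrt (a*b)"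
    by (simp add: algebra_simps)
  also have "\<dots> = b" using a b by (simp flip: real_sqrt_mult)
  finally show "exp (- (ln (a/b) / 4)) * sqrt (a*b) * exp (- (ln (a/b) / 4)) = b" .
qed

lemma Qmat_Tmat_mat_diag:
  assumes pos: "\<And>i. i < 2*S \<Longrightarrow> d i > 0"
  shows "Qmat S (diag_squeezing S d) * Tmat S (diag_thermal S d) * Qmat S (diag_squeezing S d)
           = mat_diag (2*S) d"
  unfolding Qmat_mat_diag Tmat_mat_diag mat_diag_diag
proof (rule mat_diag_cong)
  fix i assume i: "i < 2*S"
  define k where "k = i div 2"
  have k: "k < S" "2*k < 2*S" "2*k+1 < 2*S" using i unfolding k_def by presburger+
  have "even i \<Longrightarrow> i = 2*k" "odd i \<Longrightarrow> i = 2*k+1" unfolding k_def by auto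
  then show "(if even i then exp (diag_squeezing S d ! (i div 2)) else exp (- (diag_squeezing S d ! (i div 2))))
      * diag_thermal S d ! (i div 2)
      * (if even i then exp (diag_squeezing S d ! (i div 2)) else exp (- (diag_squeezing S d ! (i div 2))))
      = d i"
    using exp_quarter_ln_ratio[OF pos[OF k(2)] pos[OF k(3)]] k
    by (auto simp: diag_squeezing_def diag_thermal_def k_def[symmetric])
qed

lemma diag_CM_params:
  assumes pos: "\<And>i. i < 2*S \<Longrightarrow> d i > 0" and pair: "\<And>k. k < S \<Longrightarrow> d (2*k) * d (2*k+1) \<ge> 1"
    and W: "W \<in> SpO S"
  shows "(diag_thermal S d, diag_squeezing S d) \<in> CM_params S (W * mat_diag (2*S) d * transpose_mat W)"
proof -
  let ?Q = "Qmat S (diag_squeezing S d)" and ?T = "Tmat S (diag_thermal S d)"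
  have "W * mat_diag (2*S) d * transpose_mat W = W * (?Q * ?T * ?Q) * transpose_mat W"
    by (simp only: Qmat_Tmat_mat_diag[OF pos])
  also have "\<dots> = W * ?Q * 1\<^sub>m (2*S) * ?T * transpose_mat (1\<^sub>m (2*S)) * ?Q * transpose_mat W"
    using SpO_D(1)[OF W] by (simp add: assoc_mult_mat_dims)
  finally have "W * mat_diag (2*S) d * transpose_mat W
      = W * ?Q * 1\<^sub>m (2*S) * ?T * transpose_mat (1\<^sub>m (2*S)) * ?Q * transpose_mat W" .
  then have "\<exists>K\<in>SpO S. \<exists>L\<in>SpO S. W * mat_diag (2*S) d * transpose_mat W
      = K * ?Q * L * ?T * transpose_mat L * ?Q * transpose_mat K"
    using W one_SpO by blast
  moreover have "\<forall>x\<in>set (diag_thermal S d). x \<ge> 1" using pair by (auto simp: diag_thermal_def)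
  ultimately show ?thesis
    unfolding CM_params_def is_decomposition_def by (simp add: diag_thermal_def diag_squeezing_def)
qed

lemma prod_list_linear_factors_nth: "(\<Prod>x\<leftarrow>L. [:- x, 1:]) = (\<Prod>i\<in>{0..<length L}. [:- (L ! i), 1:])"
proof -
  have "(\<Prod>x\<leftarrow>L. [:- x, 1:]) = (\<Prod>x\<leftarrow>map (\<lambda>i. L ! i) [0..<length L]. [:- x, 1:])"
    by (simp add: map_nth)
  also have "\<dots> = (\<Prod>i\<in>{0..<length L}. [:- (L ! i), 1:])"
    using prod.distinct_set_conv_list[of "[0..<length L]" "\<lambda>i. [:- (L ! i), 1:]"] by (simp add: comp_def)
  finally show ?thesis .
qed

lemma eigenspectrum_mat_diag_permute:
  assumes f: "bij_betw f {0..<2*S} {0..<2*S}" and len: "length L = 2*S" and sorted: "sorted_wrt (\<ge>) L"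
  shows "eigenspectrum S (mat_diag (2*S) (\<lambda>q. L ! f q)) L"
  unfolding eigenspectrum_def
proof (intro conjI)
  let ?D = "mat_diag (2*S) (\<lambda>q. L ! f q)"
  have diag: "diag_mat ?D = map (\<lambda>q. L ! f q) [0..<2*S]"
    by (simp add: diag_mat_def mat_diag_def)
  have "char_poly ?D = (\<Prod>a\<leftarrow>diag_mat ?D. [:- a, 1:])"
    by (rule char_poly_upper_triangular[OF mat_diag_dim]) (simp add: upper_triangular_def)
  also have "\<dots> = (\<Prod>q\<in>{0..<2*S}. [:- (L ! f q), 1:])"
    unfolding diag using prod.distinct_set_conv_list[of "[0..<2*S]" "\<lambda>q. [:- (L ! f q), 1:]"]
    by (simp add: comp_def)
  also have "\<dots> = (\<Prod>i\<in>{0..<2*S}. [:- (L ! i), 1:])"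
    by (rule prod.reindex_bij_betw[OF f])
  finally show "char_poly ?D = (\<Prod>x\<leftarrow>L. [:- x, 1:])"
    unfolding prod_list_linear_factors_nth len .
qed (use len sorted in auto)

lemma card_matching_lower_ends:
  assumes len: "length L = 2*S" and pm: "perfect_matching L m"
  shows "card {i. i < 2*S \<and> i < m i} = S"
proof -
  define A where "A = {i. i < 2*S \<and> i < m i}"
  define B where "B = {i. i < 2*S \<and> m i < i}"
  have mp: "m i < 2*S \<and> m (m i) = i \<and> m i \<noteq> i" if "i < 2*S" for i
    using pm len that unfolding perfect_matching_def G_edge_def by fastforce
  have "inj_on m A" by (rule inj_onI) (metis A_def mem_Collect_eq mp)
  moreover have "m ` A = B"
  proof
    show "m ` A \<subseteq> B" using mp unfolding A_def B_def by auto
    show "B \<subseteq> m ` A"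
    proof
      fix x assume "x \<in> B"
      then have "m x \<in> A" "m (m x) = x" using mp unfolding A_def B_def by auto
      then show "x \<in> m ` A" by (metis imageI)
    qed
  qed
  ultimately have card_B: "card B = card A" using card_image by fastforce
  have "A \<union> B = {0..<2*S}"
  proof
    show "{0..<2*S} \<subseteq> A \<union> B"
    proof
      fix x assume "x \<in> {0..<2*S}"
      then have "x < 2*S" "m x \<noteq> x" using mp by auto
      then show "x \<in> A \<union> B" unfolding A_def B_def by (auto simp: nat_neq_iff)
    qed
  qed (auto simp: A_def B_def)
  moreover have "A \<inter> B = {}" unfolding A_def B_def by auto
  ultimately have "card A + card B = 2*S" using card_Un_disjoint[of A B] unfolding A_def B_def by simp
  then show ?thesis using card_B unfolding A_def by simp
qed

lemma perfect_matching_layout: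
  assumes len: "length L = 2*S" and pm: "perfect_matching L m"
  obtains f where "bij_betw f {0..<2*S} {0..<2*S}" "\<And>k. k < S \<Longrightarrow> f (2*k+1) = m (f (2*k))"
proof -
  have mp: "m i < 2*S \<and> m (m i) = i" if "i < 2*S" for i
    using pm len that unfolding perfect_matching_def by auto
  define A where "A = {i. i < 2*S \<and> i < m i}"
  define \<sigma> where "\<sigma> k = sorted_list_of_set A ! k" for k
  have "finite A" unfolding A_def by simp
  then have \<sigma>: "bij_betw \<sigma> {..<S} A"
    using card_matching_lower_ends[OF len pm] bij_betw_nth[of "sorted_list_of_set A"]
    unfolding \<sigma>_def A_def by (simp add: lessThan_atLeast0)
  then have \<sigma>A: "\<sigma> k < 2*S \<and> \<sigma> k < m (\<sigma> k)" if "k < S" for k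
    using that unfolding A_def bij_betw_def by auto
  define f where "f q = (if even q then \<sigma> (q div 2) else m (\<sigma> (q div 2)))" for q
  have f_lt: "f q < 2*S" if "q < 2*S" for q
    using \<sigma>A[of "q div 2"] mp that unfolding f_def by auto
  have "inj_on f {0..<2*S}"
  proof (rule inj_onI)
    fix q1 q2 assume q: "q1 \<in> {0..<2*S}" "q2 \<in> {0..<2*S}" and eq: "f q1 = f q2"
    then have k: "q1 div 2 < S" "q2 div 2 < S" by auto
    note s1 = \<sigma>A[OF k(1)] and s2 = \<sigma>A[OF k(2)]
    have \<sigma>_inj: "q1 div 2 = q2 div 2" if "\<sigma> (q1 div 2) = \<sigma> (q2 div 2)"
      using \<sigma> k that unfolding bij_betw_def by (auto dest: inj_onD)
    show "q1 = q2"
    proof (cases "even q1"; cases "even q2")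
      assume "even q1" "even q2"
      then show ?thesis using \<sigma>_inj eq unfolding f_def by (metis dvd_mult_div_cancel)
    next
      assume "odd q1" "odd q2"
      then have "\<sigma> (q1 div 2) = \<sigma> (q2 div 2)"
        using eq mp[of "\<sigma> (q1 div 2)"] mp[of "\<sigma> (q2 div 2)"] s1 s2 unfolding f_def by metis
      then show ?thesis using \<open>odd q1\<close> \<open>odd q2\<close> \<sigma>_inj by (metis div_mult_mod_eq odd_iff_mod_2_eq_one)
    next
      assume "even q1" "odd q2"
      then have "\<sigma> (q1 div 2) = m (\<sigma> (q2 div 2))" using eq unfolding f_def by simp
      then show ?thesis using s1 s2 mp[of "\<sigma> (q2 div 2)"] by (metis less_not_sym)
    next
      assume "odd q1" "even q2"
      then have "m (\<sigma> (q1 div 2)) = \<sigma> (q2 div 2)" using eq unfolding f_def by simp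
      then show ?thesis using s1 s2 mp[of "\<sigma> (q1 div 2)"] by (metis less_not_sym)
    qed
  qed
  moreover have "f ` {0..<2*S} \<subseteq> {0..<2*S}" using f_lt by auto
  ultimately have "bij_betw f {0..<2*S} {0..<2*S}"
    using endo_inj_surj[of "{0..<2*S}" f] unfolding bij_betw_def by simp
  moreover have "f (2*k+1) = m (f (2*k))" for k unfolding f_def by simp
  ultimately show ?thesis using that by blast
qed

lemma matching_weight_layout:
  assumes len: "length L = 2*S" and pm: "perfect_matching L m"
    and f: "bij_betw f {0..<2*S} {0..<2*S}" and fm: "\<And>k. k < S \<Longrightarrow> f (2*k+1) = m (f (2*k))"
  shows "matching_weight L m = 2 * (\<Sum>k<S. L ! f (2*k) * L ! f (2*k+1))"
proof -
  have "matching_weight L m = (\<Sum>q\<in>{0..<2*S}. L ! f q * L ! m (f q))"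
    unfolding matching_weight_def len lessThan_atLeast0
    by (rule sum.reindex_bij_betw[OF f, symmetric])
  also have "\<dots> = (\<Sum>k<S. L ! f (2*k) * L ! m (f (2*k)) + L ! f (2*k+1) * L ! m (f (2*k+1)))"
    by (simp only: lessThan_atLeast0[symmetric] sum_lessThan_pairs)
  also have "\<dots> = (\<Sum>k<S. 2 * (L ! f (2*k) * L ! f (2*k+1)))"
  proof (rule sum.cong[OF refl])
    fix k assume "k \<in> {..<S}"
    then have "f (2*k) < 2*S" using f unfolding bij_betw_def by auto
    then have "m (m (f (2*k))) = f (2*k)" using pm len unfolding perfect_matching_def by auto
    then show "L ! f (2*k) * L ! m (f (2*k)) + L ! f (2*k+1) * L ! m (f (2*k+1))
        = 2 * (L ! f (2*k) * L ! f (2*k+1))"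
      using fm \<open>k \<in> {..<S}\<close> by simp
  qed
  finally show ?thesis by (simp add: sum_distrib_left)
qed

(* Lay out the edges of the matching as the modes of a diagonal covariance matrix. *)
lemma matching_diag_CM:
  assumes len: "length L = 2*S" and pos: "\<forall>k<2*S. L ! k > 0" and pm: "perfect_matching L m"
    and sorted: "sorted_wrt (\<ge>) L"
  obtains \<Gamma> \<nu> r where "quantum_CM S \<Gamma>" "eigenspectrum S \<Gamma> L" "(\<nu>, r) \<in> CM_params S \<Gamma>"
    "2 * (\<Sum>k<S. (\<nu> ! k)\<^sup>2) = matching_weight L m"
    "\<And>W. W \<in> SpO S \<Longrightarrow> (\<nu>, r) \<in> CM_params S (W * \<Gamma> * transpose_mat W)"
proof -
  obtain f where f: "bij_betw f {0..<2*S} {0..<2*S}" and fm: "\<And>k. k < S \<Longrightarrow> f (2*k+1) = m (f (2*k))"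
    using perfect_matching_layout[OF len pm] by blast
  have f_lt: "f q < 2*S" if "q < 2*S" for q using f that unfolding bij_betw_def by auto
  define d where "d q = L ! f q" for q
  have d_pos: "d i > 0" if "i < 2*S" for i using pos f_lt[OF that] unfolding d_def by simp
  have d_pair: "d (2*k) * d (2*k+1) \<ge> 1" if "k < S" for k
    using pm len f_lt[of "2*k"] fm[OF that] that
    unfolding d_def perfect_matching_def G_edge_def by auto
  have "(\<Sum>k<S. (diag_thermal S d ! k)\<^sup>2) = (\<Sum>k<S. d (2*k) * d (2*k+1))"
    using d_pos by (intro sum.cong) (auto simp: diag_thermal_def intro!: mult_nonneg_nonneg less_imp_le)
  then have weight: "2 * (\<Sum>k<S. (diag_thermal S d ! k)\<^sup>2) = matching_weight L m"
    using matching_weight_layout[OF len pm f fm] unfolding d_def by simp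
  have spectrum: "eigenspectrum S (mat_diag (2*S) d) L"
    unfolding d_def[abs_def] by (rule eigenspectrum_mat_diag_permute[OF f len sorted])
  have "(diag_thermal S d, diag_squeezing S d) \<in> CM_params S (mat_diag (2*S) d)"
    using diag_CM_params[of S d, OF d_pos d_pair one_SpO] by simp
  from that[OF quantum_CM_mat_diag[of S d, OF d_pos d_pair] spectrum this weight
      diag_CM_params[of S d, OF d_pos d_pair]]
  show ?thesis .
qed

theorem mainTheorem9:
  fixes S :: nat and \<Lambda> :: "real list" and \<Gamma>0 :: "real mat"
  assumes "S \<ge> 1"
    and "quantum_CM S \<Gamma>0"
    and "eigenspectrum S \<Gamma>0 \<Lambda>"
    and "\<not> unique_pairing \<Lambda>"
  shows "\<exists>\<Gamma>1 \<Gamma>2. quantum_CM S \<Gamma>1 \<and> quantum_CM S \<Gamma>2 \<and>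
           eigenspectrum S \<Gamma>1 \<Lambda> \<and> eigenspectrum S \<Gamma>2 \<Lambda> \<and>
           CM_params S \<Gamma>1 \<noteq> CM_params S \<Gamma>2 \<and>
           \<not> (\<exists>W \<in> SpO S. \<Gamma>2 = W * \<Gamma>1 * transpose_mat W)"
proof -
  have len: "length \<Lambda> = 2*S" and sorted: "sorted_wrt (\<ge>) \<Lambda>"
    using assms(3) unfolding eigenspectrum_def by auto
  note spectrum = quantum_CM_spectrum[OF assms(2,3)]
  obtain m1 m2 where pm: "perfect_matching \<Lambda> m1" "perfect_matching \<Lambda> m2"
    and weights: "matching_weight \<Lambda> m1 < matching_weight \<Lambda> m2"
    using non_unique_pairing_weights_differ[OF sorted _ _ _ assms(4)] spectrum len by auto
  obtain \<Gamma>1 \<nu>1 r1 where \<Gamma>1: "quantum_CM S \<Gamma>1" "eigenspectrum S \<Gamma>1 \<Lambda>" "(\<nu>1, r1) \<in> CM_params S \<Gamma>1"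
    "2 * (\<Sum>k<S. (\<nu>1 ! k)\<^sup>2) = matching_weight \<Lambda> m1"
    "\<And>W. W \<in> SpO S \<Longrightarrow> (\<nu>1, r1) \<in> CM_params S (W * \<Gamma>1 * transpose_mat W)"
    using matching_diag_CM[OF len spectrum(1) pm(1) sorted] by blast
  obtain \<Gamma>2 \<nu>2 r2 where \<Gamma>2: "quantum_CM S \<Gamma>2" "eigenspectrum S \<Gamma>2 \<Lambda>" "(\<nu>2, r2) \<in> CM_params S \<Gamma>2"
    "2 * (\<Sum>k<S. (\<nu>2 ! k)\<^sup>2) = matching_weight \<Lambda> m2"
    by (rule matching_diag_CM[OF len spectrum(1) pm(2) sorted])
  have "(\<nu>1, r1) \<notin> CM_params S \<Gamma>2"
    using CM_params_trace[of \<nu>1 r1 S \<Gamma>2] CM_params_trace[OF \<Gamma>2(3)] \<Gamma>1(4) \<Gamma>2(4) weights by auto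
  then have "CM_params S \<Gamma>1 \<noteq> CM_params S \<Gamma>2" and "\<not> (\<exists>W \<in> SpO S. \<Gamma>2 = W * \<Gamma>1 * transpose_mat W)"
    using \<Gamma>1(3,5) by blast+
  then show ?thesis using \<Gamma>1(1,2) \<Gamma>2(1,2) by blast
qed

end
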